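(* Let $1\le m\le n$, let $\Re_I(m,n)=\{Z\in\mathbb C^{m\times n}: I^{(m)}-Z\overline Z'>0\}$, and for an $m\times n$ complex matrix $U$ with $U\overline U'=I^{(m)}$ and $j\in\{1,\dots,mn\}$ define $$P_j(Z,U)=\frac{\det(I-Z\overline Z')^{n/j}}{|\det(I-Z\overline U')|^{2n/j}},\qquad Z\in\Re_I(m,n).$$ Then $L_j\big(P_j(\cdot,U)\big)(Z)=0$ for all $Z\in\Re_I(m,n)$, every such $U$, and every $j=1,\dots,mn$.
   Context: Coordinates on $\Re_I(m,n)$ are the $mn$ entries $z_{11},\dots,z_{1n},\dots,z_{m1},\dots,z_{mn}$ of $Z$ in this order. The Bergman kernel is (up to a constant) $K_I(Z,\overline Z)=\det(I-Z\overline Z')^{-(m+n)}$, and the Bergman metric matrix is $T_I(Z)=\big(\partial^2\log K_I/\partial z_{i\alpha}\partial\overline z_{k\beta}\big)$, which equals $(m+n)$ times the Kronecker product $(I-Z\overline Z')^{-1}\times(I-\overline Z'Z)^{-1}$. For a $C^2$ function $u$ let $L(u)=T_I^{-1}\big(\partial^2u/\partial z_{i\alpha}\partial\overline z_{k\beta}\big)$ (an $mn\times mn$ matrix) and $L_j(u)$ the sum of all principal minors of degree $j$ of $L(u)$. (Multiplying $T_I$ by a positive constant does not affect the vanishing of $L_j(u)$.) *)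

theory Defs
  imports "HOL-Analysis.Analysis"
begin

text \<open>Complex m x n matrices are represented as complex^'n^'m (m rows indexed by 'm,
  n columns indexed by 'n).
  The mn coordinates are indexed by the finite type 'm \<times> 'n.\<close>

definition ctrans :: "complex^'n^'m \<Rightarrow> complex^'m^'n" where
  "ctrans Z = (\<chi> a i. cnj (Z$i$a))"

definition pos_def_herm :: "complex^'m^'m \<Rightarrow> bool" where
  "pos_def_herm A \<longleftrightarrow> (\<forall>i k. A$k$i = cnj (A$i$k)) \<and>
     (\<forall>x::complex^'m. x \<noteq> 0 \<longrightarrow> 0 < Re (\<Sum>i\<in>UNIV. \<Sum>k\<in>UNIV. cnj (x$i) * A$i$k * x$k))"

definition domI :: "(complex^'n^'m) set" where
  "domI = {Z. pos_def_herm (mat 1 - Z ** ctrans Z)}"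

definition dirD :: "complex^'n^'m \<Rightarrow> (complex^'n^'m \<Rightarrow> complex) \<Rightarrow> complex^'n^'m \<Rightarrow> complex" where
  "dirD V f Z = vector_derivative (\<lambda>t::real. f (Z + t *\<^sub>R V)) (at 0)"

definition Emat :: "complex \<Rightarrow> 'm \<Rightarrow> 'n \<Rightarrow> complex^'n^'m" where
  "Emat c i a = (\<chi> k b. if k = i \<and> b = a then c else 0)"

definition dz :: "'m \<Rightarrow> 'n \<Rightarrow> (complex^'n^'m \<Rightarrow> complex) \<Rightarrow> complex^'n^'m \<Rightarrow> complex" where
  "dz i a f Z = (dirD (Emat 1 i a) f Z - \<i> * dirD (Emat \<i> i a) f Z) / 2"

definition dzbar :: "'m \<Rightarrow> 'n \<Rightarrow> (complex^'n^'m \<Rightarrow> complex) \<Rightarrow> complex^'n^'m \<Rightarrow> complex" where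
  "dzbar i a f Z = (dirD (Emat 1 i a) f Z + \<i> * dirD (Emat \<i> i a) f Z) / 2"

definition cHess :: "(complex^'n^'m \<Rightarrow> complex) \<Rightarrow> complex^'n^'m \<Rightarrow> complex^('m\<times>'n)^('m\<times>'n)" where
  "cHess f Z = (\<chi> p q. dz (fst p) (snd p) (dzbar (fst q) (snd q) f) Z)"

text \<open>log of the Bergman kernel K_I = det(I - Z Z*)^{-(m+n)}.\<close>
definition logKI :: "complex^'n^'m \<Rightarrow> complex" where
  "logKI Z = of_real (- real (CARD('m) + CARD('n)) * ln (Re (det (mat 1 - Z ** ctrans Z))))"

definition TI :: "complex^'n^'m \<Rightarrow> complex^('m\<times>'n)^('m\<times>'n)" where
  "TI Z = cHess logKI Z"

definition Lop :: "(complex^'n^'m \<Rightarrow> complex) \<Rightarrow> complex^'n^'m \<Rightarrow> complex^('m\<times>'n)^('m\<times>'n)" where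
  "Lop u Z = matrix_inv (TI Z) ** cHess u Z"

definition sum_principal_minors :: "nat \<Rightarrow> 'a::comm_ring_1^'k^'k \<Rightarrow> 'a" where
  "sum_principal_minors j A =
     (\<Sum>S\<in>{S::'k set. card S = j}. \<Sum>p\<in>{p. p permutes S}.
        of_int (sign p) * (\<Prod>i\<in>S. A$i$(p i)))"

definition Lj :: "nat \<Rightarrow> (complex^'n^'m \<Rightarrow> complex) \<Rightarrow> complex^'n^'m \<Rightarrow> complex" where
  "Lj j u Z = sum_principal_minors j (Lop u Z)"

definition Pj :: "nat \<Rightarrow> complex^'n^'m \<Rightarrow> complex^'n^'m \<Rightarrow> real" where
  "Pj j U Z = (Re (det (mat 1 - Z ** ctrans Z))) powr (real CARD('n) / real j) /
              (cmod (det (mat 1 - Z ** ctrans U))) powr (2 * real CARD('n) / real j)"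

end

theory Submission
  imports Defs
begin

text \<open>On the open set where \<open>det (I - Z Z\<^sup>*) > 0\<close> and \<open>det (I - Z U\<^sup>*) \<noteq> 0\<close>, which contains
  the classical domain, \<open>P\<^sub>j = exp (s \<Phi>)\<close> with \<open>s = n / j\<close> and
  \<open>\<Phi> = log det (I - Z Z\<^sup>*) - log \<bar>det (I - Z U\<^sup>*)\<bar>\<^sup>2\<close>.
  By Jacobi's formula for the derivative of a determinant, the Bergman metric is
  \<open>T = (m + n) A \<otimes> B\<close> with \<open>A = (I - Z Z\<^sup>*)\<^sup>-\<^sup>1\<close> and \<open>B = (I - Z\<^sup>* Z)\<^sup>-\<^sup>1\<close>, and the complex
  Hessian of \<open>P\<^sub>j\<close> is \<open>s P\<^sub>j (s \<partial>\<Phi> \<otimes> \<partial>\<Phi>\<^sup>- - A \<otimes> B)\<close>, where \<open>\<partial>\<Phi>\<^sup>-\<close> is the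
  \<open>z\<close>-bar gradient. Hence \<open>L(P\<^sub>j) = T\<^sup>-\<^sup>1 Hess(P\<^sub>j) = k I + v w\<^sup>T\<close> is a scalar plus a rank-one
  matrix, whose sum of principal minors of degree \<open>j\<close> is
  \<open>C(N, j) k\<^sup>j + C(N - 1, j - 1) k\<^sup>j\<^sup>-\<^sup>1 w\<^sup>T v\<close>, where \<open>N = m n\<close> and \<open>k = - s P\<^sub>j / (m + n)\<close>.
  The matrix identity \<open>(H\<^sup>* U - A Z) (I - Z\<^sup>* Z) (U\<^sup>* H - Z\<^sup>* A) (I - Z Z\<^sup>*) = I\<close>, valid for
  \<open>H = (I - Z U\<^sup>*)\<^sup>-\<^sup>1\<close> when \<open>U U\<^sup>* = I\<close>, gives \<open>w\<^sup>T v = s\<^sup>2 P\<^sub>j m / (m + n)\<close>, and the absorption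
  identity \<open>C(N - 1, j - 1) (n / j) m = C(N, j)\<close> makes the sum vanish.\<close>

lemma matrix_mul_uminus_right: "(A::'a::ring_1^'n^'m) ** (- B) = - (A ** (B::'a^'p^'n))"
  by (simp add: matrix_matrix_mult_def vec_eq_iff sum_negf)

lemma matrix_mul_uminus_left: "(- A::'a::ring_1^'n^'m) ** B = - (A ** (B::'a^'p^'n))"
  by (simp add: matrix_matrix_mult_def vec_eq_iff sum_negf)

lemma matrix_mul_diff_right: "(A::'a::ring_1^'n^'m) ** (B - C) = A ** B - A ** (C::'a^'p^'n)"
  by (simp add: matrix_matrix_mult_def vec_eq_iff sum_subtractf right_diff_distrib)

lemma matrix_mul_diff_left: "((A::'a::ring_1^'n^'m) - B) ** C = A ** C - B ** (C::'a^'p^'n)"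
  by (simp add: matrix_matrix_mult_def vec_eq_iff sum_subtractf left_diff_distrib)

lemma matrix_mul_add_left: "((A::'a::semiring_1^'n^'m) + B) ** C = A ** C + B ** (C::'a^'p^'n)"
  by (simp add: matrix_matrix_mult_def vec_eq_iff sum.distrib distrib_right)

lemma trace_uminus: "trace (- A :: 'a::comm_ring_1^'k^'k) = - trace A"
  by (simp add: trace_def sum_negf)

lemma sum_UNIV_prod:
  "(\<Sum>q\<in>(UNIV::('a::finite \<times> 'b::finite) set). f q) = (\<Sum>k\<in>UNIV. \<Sum>b\<in>UNIV. f (k, b))"
  by (simp add: sum.cartesian_product UNIV_Times_UNIV[symmetric] del: UNIV_Times_UNIV)

lemma matrix_mul_nth_prod_index:
  "((X::'r::semiring_1^('a::finite \<times> 'b::finite)^'c) ** (Y::'r^'d^('a \<times> 'b))) $ p $ p' =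
     (\<Sum>k\<in>UNIV. \<Sum>b\<in>UNIV. X $ p $ (k, b) * Y $ (k, b) $ p')"
  unfolding matrix_matrix_mult_def by (simp add: sum_UNIV_prod)

lemma ctrans_ctrans [simp]: "ctrans (ctrans A) = A"
  by (simp add: ctrans_def vec_eq_iff)

lemma ctrans_matrix_mul: "ctrans (A ** B) = ctrans B ** ctrans A"
  by (simp add: ctrans_def matrix_matrix_mult_def vec_eq_iff mult.commute)

lemma ctrans_diff: "ctrans (A - B) = ctrans A - ctrans B"
  by (simp add: ctrans_def vec_eq_iff)

lemma ctrans_uminus: "ctrans (- A) = - ctrans A"
  by (simp add: ctrans_def vec_eq_iff)

lemma ctrans_scaleR: "ctrans (t *\<^sub>R Z) = t *\<^sub>R ctrans Z"
  by (simp add: ctrans_def vec_eq_iff)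

lemma ctrans_mat_1 [simp]: "ctrans (mat 1 :: complex^'k^'k) = mat 1"
  by (simp add: ctrans_def vec_eq_iff mat_def)

lemma ctrans_Emat: "ctrans (Emat c i a) = Emat (cnj c) a i"
  by (auto simp: ctrans_def Emat_def vec_eq_iff)

lemma det_ctrans: "det (ctrans (M::complex^'k^'k)) = cnj (det M)"
proof -
  have "ctrans M = transpose (\<chi> i j. cnj (M $ i $ j))"
    by (simp add: ctrans_def transpose_def)
  then have "det (ctrans M) = det (\<chi> i j. cnj (M $ i $ j))" by simp
  also have "\<dots> = cnj (det M)" by (simp add: det_def)
  finally show ?thesis .
qed

lemma Emat_matrix_mul_nth: "(Emat c i a ** Y) $ r $ s = (if r = i then c * Y $ a $ s else 0)"
  by (simp add: Emat_def matrix_matrix_mult_def if_distrib[of "\<lambda>t. t * _"] cong: if_cong)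

lemma matrix_mul_Emat_nth: "(X ** Emat c i a) $ r $ s = (if s = a then X $ r $ i * c else 0)"
  by (simp add: Emat_def matrix_matrix_mult_def if_distrib[of "\<lambda>t. _ * t"] cong: if_cong)

lemma matrix_mul_Emat_mul_nth: "(X ** (Emat c i a ** Y)) $ r $ s = X $ r $ i * c * Y $ a $ s"
proof -
  have "(X ** (Emat c i a ** Y)) $ r $ s = (\<Sum>k\<in>UNIV. X $ r $ k * (Emat c i a ** Y) $ k $ s)"
    unfolding matrix_matrix_mult_def[of X] by simp
  also have "\<dots> = X $ r $ i * c * Y $ a $ s"
    unfolding Emat_matrix_mul_nth by (simp add: if_distrib[of "\<lambda>t. _ * t"] mult_ac cong: if_cong)
  finally show ?thesis .
qed

lemma trace_mul_Emat_mul: "trace (A ** (Emat c i a ** X)) = c * (X ** A) $ a $ i"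
  unfolding trace_def matrix_mul_Emat_mul_nth
  by (simp add: matrix_matrix_mult_def sum_distrib_left mult_ac)

lemma trace_mul_mul_Emat: "trace (A ** (X ** Emat c i a)) = c * (A ** X) $ a $ i"
  unfolding trace_def matrix_mul_assoc matrix_mul_Emat_nth
  by (simp add: mult_ac)

lemma invertible_matrix_inv_mul:
  fixes A :: "'a::semiring_1^'k^'k"
  assumes "invertible A"
  shows "A ** matrix_inv A = mat 1" "matrix_inv A ** A = mat 1"
  using someI_ex[OF assms[unfolded invertible_def]] unfolding matrix_inv_def by auto

lemma matrix_inv_eqI:
  fixes A :: "'a::field^'k^'k"
  assumes "B ** A = mat 1"
  shows "matrix_inv A = B"
proof -
  have "A ** B = mat 1" using assms matrix_left_right_inverse by blast
  then have inv: "invertible A" using assms invertible_def by blast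
  have "matrix_inv A = matrix_inv A ** (A ** B)" using \<open>A ** B = mat 1\<close> by simp
  also have "\<dots> = B" using invertible_matrix_inv_mul(2)[OF inv] by (simp add: matrix_mul_assoc)
  finally show ?thesis .
qed

lemma det_eq_0_imp_kernel:
  fixes M :: "'a::field^'k^'k"
  assumes "det M = 0"
  obtains x where "x \<noteq> 0" "M *v x = 0"
proof -
  have "\<not> inj ((*v) M)"
    using det_nz_iff_inj_gen[OF matrix_vector_mul_linear_gen[of M]] assms
    by (simp add: matrix_of_matrix_vector_mul)
  then obtain x y where "x \<noteq> y" "M *v x = M *v y" unfolding inj_def by blast
  then show thesis
    using that[of "x - y"] by (simp add: matrix_vector_mult_diff_distrib)
qed

definition row_replace :: "'a^'k^'k \<Rightarrow> 'k \<Rightarrow> 'a^'k \<Rightarrow> 'a^'k^'k" where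
  "row_replace M r x = (\<chi> k. if k = r then x else M $ k)"

definition cofactor :: "'a::comm_ring_1^'k^'k \<Rightarrow> 'k \<Rightarrow> 'k \<Rightarrow> 'a" where
  "cofactor M r c = det (row_replace M r (axis c 1))"

lemma det_row_replace_expand:
  fixes M :: "'a::comm_ring_1^'k^'k"
  shows "det (row_replace M r x) = (\<Sum>c\<in>UNIV. x $ c * cofactor M r c)"
proof -
  have x: "x = (\<Sum>c\<in>UNIV. x $ c *s axis c 1)"
    by (simp add: vec_eq_iff axis_def sum_component if_distrib[of "\<lambda>t. _ * t"] cong: if_cong)
  have "det (row_replace M r x) = det (\<chi> k. if k = r then (\<Sum>c\<in>UNIV. x $ c *s axis c 1) else M $ k)"
    unfolding row_replace_def by (subst x) simp
  also have "\<dots> = (\<Sum>c\<in>UNIV. det (\<chi> k. if k = r then x $ c *s axis c 1 else M $ k))"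
    by (rule det_linear_row_sum) simp
  also have "\<dots> = (\<Sum>c\<in>UNIV. x $ c * cofactor M r c)"
    unfolding cofactor_def row_replace_def by (simp add: det_row_mul)
  finally show ?thesis .
qed

lemma det_row_replace_row: "det (row_replace M r (M $ i)) = (if i = r then det M else 0)"
proof (cases "i = r")
  case True
  then have "row_replace M r (M $ i) = M" by (simp add: row_replace_def vec_eq_iff)
  then show ?thesis using True by simp
next
  case False
  have "row i (row_replace M r (M $ i)) = row r (row_replace M r (M $ i))"
    using False by (simp add: row_replace_def row_def vec_eq_iff)
  then show ?thesis using det_identical_rows[OF False] False by simp
qed

lemma cofactor_eq_det_matrix_inv:
  fixes M :: "'a::field^'k^'k"
  assumes "det M \<noteq> 0"
  shows "cofactor M r c = det M * matrix_inv M $ c $ r"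
proof -
  have inv: "invertible M" using assms invertible_det_nz by blast
  define adj where "adj = (\<chi> c r. cofactor M r c)"
  have "M ** adj = mat (det M)"
    unfolding matrix_matrix_mult_def adj_def
    by (simp add: vec_eq_iff mat_def det_row_replace_expand[symmetric] det_row_replace_row)
  then have "matrix_inv M ** (M ** adj) = matrix_inv M ** mat (det M)" by simp
  then have "adj = matrix_inv M ** mat (det M)"
    by (simp add: matrix_mul_assoc invertible_matrix_inv_mul(2)[OF inv])
  then have "adj $ c $ r = det M * matrix_inv M $ c $ r"
    by (simp add: matrix_matrix_mult_def mat_def if_distrib mult.commute cong: if_cong)
  then show ?thesis by (simp add: adj_def)
qed

section \<open>Principal minors of a scalar matrix plus a rank-one matrix\<close>

lemma det_add_multiples_of_row:
  fixes a :: "'k::finite \<Rightarrow> 'a::comm_ring_1^'k" and y :: "'a^'k"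
  assumes "r \<notin> R"
  shows "det (\<chi> p. if p = r then y else if p \<in> R then a p + x p *s y else a p) =
         det (\<chi> p. if p = r then y else a p)"
  using assms
proof (induction R rule: infinite_finite_induct)
  case (infinite R)
  then show ?case by simp
next
  case empty
  then show ?case by (simp cong: if_cong)
next
  case (insert q R)
  have qr: "q \<noteq> r" using insert by auto
  let ?b = "\<lambda>p. if p = r then y else if p \<in> R then a p + x p *s y else a p"
  have e1: "(\<chi> p. if p = r then y else if p \<in> insert q R then a p + x p *s y else a p) =
      (\<chi> p. if p = q then a q + x q *s y else ?b p)"
    using qr insert by (auto simp: vec_eq_iff)
  have e2: "(\<chi> p. if p = q then a q else ?b p) = (\<chi> p. if p = r then y else if p \<in> R then a p + x p *s y else a p)"
    using qr insert by (auto simp: vec_eq_iff)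
  have "det (\<chi> p. if p = q then y else ?b p) = 0"
    by (rule det_identical_rows[OF qr]) (simp add: row_def vec_eq_iff qr)
  then have z: "det (\<chi> p. if p = q then x q *s y else ?b p) = 0"
    by (simp add: det_row_mul)
  show ?case unfolding e1 det_row_add[of q "\<lambda>p. a q" "\<lambda>p. x q *s y" ?b, simplified] e2 z
    using insert by simp
qed

definition diag_row :: "('k \<Rightarrow> 'a::zero) \<Rightarrow> 'k \<Rightarrow> 'a^'k" where
  "diag_row d p = (\<chi> q. if q = p then d p else 0)"

lemma det_diag_replace_row:
  fixes d :: "'k::finite \<Rightarrow> 'a::comm_ring_1"
  shows "det (\<chi> p. if p = r then y else diag_row d p) = y $ r * (\<Prod>p\<in>UNIV - {r}. d p)"
proof -
  have M: "(\<chi> p. if p = r then y else diag_row d p) = row_replace (\<chi> p. diag_row d p) r y"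
    by (simp add: row_replace_def vec_eq_iff)
  have cofactor: "cofactor (\<chi> p. diag_row d p) r c = (if c = r then (\<Prod>p\<in>UNIV - {r}. d p) else 0)" for c
  proof (cases "c = r")
    case True
    have "cofactor (\<chi> p. diag_row d p) r c = (\<Prod>i\<in>UNIV. (if i = r then 1 else d i))"
      unfolding cofactor_def row_replace_def True
      by (subst det_diagonal) (auto simp: diag_row_def axis_def intro!: prod.cong)
    also have "\<dots> = (\<Prod>p\<in>UNIV - {r}. d p)"
      by (subst prod.remove[of _ r]) auto
    finally show ?thesis using True by simp
  next
    case False
    let ?R = "row_replace (\<chi> p. diag_row d p) r (axis c 1)"
    have "cofactor (\<chi> p. diag_row d p) r c = det (\<chi> p. if p = c then d c *s axis c 1 else ?R $ p)"
      unfolding cofactor_def using False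
      by (intro arg_cong[where f=det]) (auto simp: vec_eq_iff row_replace_def diag_row_def axis_def)
    also have "\<dots> = d c * det (\<chi> p. if p = c then axis c 1 else ?R $ p)"
      by (rule det_row_mul)
    also have "det (\<chi> p. if p = c then axis c 1 else ?R $ p) = 0"
      by (rule det_identical_rows[OF False]) (simp add: row_def row_replace_def vec_eq_iff)
    finally show ?thesis using False by simp
  qed
  show ?thesis unfolding M det_row_replace_expand cofactor
    by (simp add: if_distrib[of "\<lambda>t. _ * t"] cong: if_cong)
qed

lemma det_diag_plus_rank_one_rows:
  fixes d x :: "'k::finite \<Rightarrow> 'a::comm_ring_1"
  shows "det (\<chi> p. if p \<in> R then diag_row d p + x p *s y else diag_row d p) =
     (\<Prod>p\<in>UNIV. d p) + (\<Sum>r\<in>R. x r * y $ r * (\<Prod>p\<in>UNIV - {r}. d p))"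
proof (induction R rule: infinite_finite_induct)
  case (infinite R)
  then show ?case by simp
next
  case empty
  have "det (\<chi> p. diag_row d p) = (\<Prod>p\<in>UNIV. d p)"
    by (subst det_diagonal) (auto simp: diag_row_def)
  then show ?case by simp
next
  case (insert r R)
  let ?b = "\<lambda>p. if p \<in> R then diag_row d p + x p *s y else diag_row d p"
  have e1: "(\<chi> p. if p \<in> insert r R then diag_row d p + x p *s y else diag_row d p) =
      (\<chi> p. if p = r then diag_row d r + x r *s y else ?b p)"
    by (auto simp: vec_eq_iff)
  have e2: "(\<chi> p. if p = r then diag_row d r else ?b p) = (\<chi> p. ?b p)"
    using insert by (auto simp: vec_eq_iff)
  have "det (\<chi> p. if p = r then y else ?b p) = det (\<chi> p. if p = r then y else diag_row d p)"
    by (rule det_add_multiples_of_row) (use insert in auto)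
  then have e3: "det (\<chi> p. if p = r then x r *s y else ?b p) = x r * (y $ r * (\<Prod>p\<in>UNIV - {r}. d p))"
    by (simp add: det_row_mul det_diag_replace_row)
  show ?case unfolding e1 det_row_add[of r "\<lambda>p. diag_row d r" "\<lambda>p. x r *s y" ?b, simplified] e2 e3
    using insert by (simp add: mult_ac)
qed

lemma det_diag_plus_rank_one:
  fixes d x :: "'k::finite \<Rightarrow> 'a::comm_ring_1" and y :: "'a^'k"
  shows "det (\<chi> p q. (if p = q then d p else 0) + x p * y $ q) =
     (\<Prod>p\<in>UNIV. d p) + (\<Sum>r\<in>UNIV. x r * y $ r * (\<Prod>p\<in>UNIV - {r}. d p))"
proof -
  have "(\<chi> p q. (if p = q then d p else 0) + x p * y $ q) =
      (\<chi> p. if p \<in> UNIV then diag_row d p + x p *s y else diag_row d p)"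
    by (auto simp: vec_eq_iff diag_row_def)
  then show ?thesis using det_diag_plus_rank_one_rows[of UNIV] by simp
qed

definition pad_principal :: "'k set \<Rightarrow> 'a::zero_neq_one^'k^'k \<Rightarrow> 'a^'k^'k" where
  "pad_principal S X = (\<chi> p q. if p \<in> S \<and> q \<in> S then X $ p $ q else if p = q then 1 else 0)"

lemma principal_minor_eq_det:
  fixes X :: "'a::comm_ring_1^'k::finite^'k"
  shows "(\<Sum>p\<in>{p. p permutes S}. of_int (sign p) * (\<Prod>i\<in>S. X $ i $ p i)) = det (pad_principal S X)"
  unfolding det_def
proof (rule sum.mono_neutral_cong_left)
  show "finite {p. p permutes (UNIV::'k set)}" by simp
  show "{p. p permutes S} \<subseteq> {p. p permutes UNIV}"
    by (auto intro: permutes_subset)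
  show "\<forall>p\<in>{p. p permutes UNIV} - {p. p permutes S}.
     of_int (sign p) * (\<Prod>i\<in>UNIV. pad_principal S X $ i $ p i) = 0"
  proof
    fix p assume "p \<in> {p. p permutes UNIV} - {p. p permutes S}"
    then obtain i where "i \<notin> S" "p i \<noteq> i"
      unfolding permutes_def by blast
    then have "pad_principal S X $ i $ p i = 0" by (simp add: pad_principal_def)
    then show "of_int (sign p) * (\<Prod>i\<in>UNIV. pad_principal S X $ i $ p i) = 0"
      by (metis UNIV_I finite mult_zero_right prod_zero)
  qed
  fix p assume "p \<in> {p. p permutes S}"
  then have p: "p permutes S" by simp
  have "(\<Prod>i\<in>S. X $ i $ p i) = (\<Prod>i\<in>UNIV. pad_principal S X $ i $ p i)"
  proof (rule prod.mono_neutral_cong_left)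
    show "\<forall>i\<in>UNIV - S. pad_principal S X $ i $ p i = 1"
      using permutes_not_in[OF p] by (auto simp: pad_principal_def)
    show "X $ i $ p i = pad_principal S X $ i $ p i" if "i \<in> S" for i
      using that permutes_in_image[OF p, of i] by (simp add: pad_principal_def)
  qed auto
  then show "of_int (sign p) * (\<Prod>i\<in>S. X $ i $ p i) =
    of_int (sign p) * (\<Prod>i\<in>UNIV. pad_principal S X $ i $ p i)"
    by simp
qed

lemma principal_minor_scalar_plus_rank_one:
  fixes v w :: "'k::finite \<Rightarrow> 'a::comm_ring_1"
  assumes "S \<noteq> {}"
  shows "(\<Sum>p\<in>{p. p permutes S}. of_int (sign p) * (\<Prod>i\<in>S. (\<chi> p q. (if p = q then k0 else 0) + v p * w q) $ i $ p i)) =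
    k0 ^ card S + k0 ^ (card S - 1) * (\<Sum>r\<in>S. v r * w r)"
proof -
  define d where "d = (\<lambda>p. if p \<in> S then k0 else 1)"
  define x where "x = (\<lambda>p. if p \<in> S then v p else 0)"
  define y where "y = (\<chi> q. if q \<in> S then w q else 0)"
  have M: "pad_principal S (\<chi> p q. (if p = q then k0 else 0) + v p * w q) =
      (\<chi> p q. (if p = q then d p else 0) + x p * y $ q)"
    by (auto simp: pad_principal_def vec_eq_iff d_def x_def y_def)
  have pd: "(\<Prod>p\<in>UNIV. d p) = k0 ^ card S"
    unfolding d_def by (simp add: prod.If_cases Int_def)
  have pd2: "(\<Prod>p\<in>UNIV - {r}. d p) = k0 ^ (card S - 1)" if "r \<in> S" for r
  proof -
    have "(\<Prod>p\<in>UNIV - {r}. d p) = k0 ^ card ((UNIV - {r}) \<inter> S)"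
      unfolding d_def by (simp add: prod.If_cases Int_def)
    also have "(UNIV - {r}) \<inter> S = S - {r}" by auto
    finally show ?thesis using that by simp
  qed
  have "(\<Sum>r\<in>UNIV. x r * y $ r * (\<Prod>p\<in>UNIV - {r}. d p)) = (\<Sum>r\<in>S. v r * w r * k0 ^ (card S - 1))"
    by (rule sum.mono_neutral_cong_right) (auto simp: x_def y_def pd2)
  then show ?thesis
    unfolding principal_minor_eq_det M det_diag_plus_rank_one pd by (simp add: sum_distrib_left mult_ac)
qed

lemma card_subsets_card:
  "card {S::'k::finite set. card S = j} = CARD('k) choose j"
  using n_subsets[of "UNIV::'k set" j] by simp

lemma card_subsets_card_mem:
  assumes "1 \<le> j"
  shows "card {S::'k::finite set. card S = j \<and> r \<in> S} = (CARD('k) - 1) choose (j - 1)"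
proof -
  have "{S::'k set. card S = j \<and> r \<in> S} = insert r ` {T. T \<subseteq> UNIV - {r} \<and> card T = j - 1}"
  proof
    show "{S::'k set. card S = j \<and> r \<in> S} \<subseteq> insert r ` {T. T \<subseteq> UNIV - {r} \<and> card T = j - 1}"
    proof
      fix S :: "'k set" assume "S \<in> {S. card S = j \<and> r \<in> S}"
      then have S: "card S = j" "r \<in> S" by auto
      then have "S = insert r (S - {r})" "S - {r} \<in> {T. T \<subseteq> UNIV - {r} \<and> card T = j - 1}" by auto
      then show "S \<in> insert r ` {T. T \<subseteq> UNIV - {r} \<and> card T = j - 1}" by blast
    qed
    show "insert r ` {T. T \<subseteq> UNIV - {r} \<and> card T = j - 1} \<subseteq> {S::'k set. card S = j \<and> r \<in> S}"
      using assms by (auto simp: card_insert_if subset_eq)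
  qed
  moreover have "inj_on (insert r) {T. T \<subseteq> UNIV - {r} \<and> card T = j - 1}"
    by (rule inj_onI) blast
  ultimately have "card {S::'k set. card S = j \<and> r \<in> S} = card {T. T \<subseteq> UNIV - {r} \<and> card T = j - 1}"
    by (simp add: card_image)
  also have "\<dots> = card (UNIV - {r::'k}) choose (j - 1)" by (rule n_subsets) simp
  finally show ?thesis by simp
qed

lemma sum_principal_minors_scalar_plus_rank_one:
  fixes v w :: "'k::finite \<Rightarrow> 'a::comm_ring_1"
  assumes "1 \<le> j"
  shows "sum_principal_minors j (\<chi> p q. (if p = q then k0 else 0) + v p * w q) =
    of_nat (CARD('k) choose j) * k0 ^ j + of_nat ((CARD('k) - 1) choose (j - 1)) * k0 ^ (j - 1) * (\<Sum>r\<in>UNIV. v r * w r)"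
proof -
  have "sum_principal_minors j (\<chi> p q. (if p = q then k0 else 0) + v p * w q) =
     (\<Sum>S\<in>{S::'k set. card S = j}. k0 ^ j + k0 ^ (j - 1) * (\<Sum>r\<in>S. v r * w r))"
    unfolding sum_principal_minors_def
  proof (rule sum.cong[OF refl])
    fix S :: "'k set" assume "S \<in> {S. card S = j}"
    then have "card S = j" "S \<noteq> {}" using assms by auto
    then show "(\<Sum>p\<in>{p. p permutes S}. of_int (sign p) * (\<Prod>i\<in>S. (\<chi> p q. (if p = q then k0 else 0) + v p * w q) $ i $ p i)) =
       k0 ^ j + k0 ^ (j - 1) * (\<Sum>r\<in>S. v r * w r)"
      using principal_minor_scalar_plus_rank_one[of S k0 v w] by simp
  qed
  also have "\<dots> = of_nat (card {S::'k set. card S = j}) * k0 ^ j +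
       k0 ^ (j - 1) * (\<Sum>S\<in>{S::'k set. card S = j}. \<Sum>r\<in>UNIV. if r \<in> S then v r * w r else 0)"
    by (simp add: sum.distrib sum_distrib_left sum.If_cases Int_def)
  also have "(\<Sum>S\<in>{S::'k set. card S = j}. \<Sum>r\<in>UNIV. if r \<in> S then v r * w r else 0) =
      (\<Sum>r\<in>UNIV. of_nat (card {S::'k set. card S = j \<and> r \<in> S}) * (v r * w r))"
    by (subst sum.swap) (simp add: sum.If_cases Int_def conj_commute)
  also have "\<dots> = of_nat ((CARD('k) - 1) choose (j - 1)) * (\<Sum>r\<in>UNIV. v r * w r)"
    by (simp add: card_subsets_card_mem[OF assms] sum_distrib_left)
  finally show ?thesis by (simp add: card_subsets_card mult_ac)
qed

section \<open>Derivatives of matrix-valued functions\<close>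

definition has_matrix_derivative ::
  "('x::real_normed_vector \<Rightarrow> 'a::real_normed_field^'c^'r) \<Rightarrow> ('x \<Rightarrow> 'a^'c^'r) \<Rightarrow> 'x \<Rightarrow> bool" where
  "has_matrix_derivative G G' Z \<longleftrightarrow> (\<forall>i j. ((\<lambda>W. G W $ i $ j) has_derivative (\<lambda>V. G' V $ i $ j)) (at Z))"

lemma has_matrix_derivativeD:
  "has_matrix_derivative G G' Z \<Longrightarrow> ((\<lambda>W. G W $ i $ j) has_derivative (\<lambda>V. G' V $ i $ j)) (at Z)"
  unfolding has_matrix_derivative_def by blast

lemma has_matrix_derivative_const: "has_matrix_derivative (\<lambda>W. C) (\<lambda>V. 0) Z"
  by (simp add: has_matrix_derivative_def)

lemma has_matrix_derivative_id:
  fixes Z :: "'a::real_normed_field^'c^'r"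
  shows "has_matrix_derivative (\<lambda>W. W) (\<lambda>V. V) Z"
  unfolding has_matrix_derivative_def
proof (intro allI)
  fix i j
  have "bounded_linear (\<lambda>V::'a^'c^'r. V $ i $ j)"
    using bounded_linear_compose[OF bounded_linear_vec_nth bounded_linear_vec_nth] by blast
  then show "((\<lambda>W::'a^'c^'r. W $ i $ j) has_derivative (\<lambda>V. V $ i $ j)) (at Z)"
    by (rule bounded_linear_imp_has_derivative)
qed

lemma has_matrix_derivative_diff:
  "has_matrix_derivative G G' Z \<Longrightarrow> has_matrix_derivative H H' Z \<Longrightarrow>
    has_matrix_derivative (\<lambda>W. G W - H W) (\<lambda>V. G' V - H' V) Z"
  unfolding has_matrix_derivative_def by (auto intro!: derivative_eq_intros)

lemma has_matrix_derivative_ctrans: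
  "has_matrix_derivative G G' Z \<Longrightarrow> has_matrix_derivative (\<lambda>W. ctrans (G W)) (\<lambda>V. ctrans (G' V)) Z"
  unfolding has_matrix_derivative_def ctrans_def by (auto intro!: has_derivative_cnj)

lemma has_matrix_derivative_mult:
  assumes "has_matrix_derivative G G' Z" "has_matrix_derivative H H' Z"
  shows "has_matrix_derivative (\<lambda>W. G W ** H W) (\<lambda>V. G' V ** H Z + G Z ** H' V) Z"
  unfolding has_matrix_derivative_def
proof (intro allI)
  fix i j
  have "((\<lambda>W. \<Sum>r\<in>UNIV. G W $ i $ r * H W $ r $ j) has_derivative
        (\<lambda>V. \<Sum>r\<in>UNIV. G Z $ i $ r * H' V $ r $ j + G' V $ i $ r * H Z $ r $ j)) (at Z)"
    using assms unfolding has_matrix_derivative_def by (intro has_derivative_sum has_derivative_mult) auto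
  then show "((\<lambda>W. (G W ** H W) $ i $ j) has_derivative (\<lambda>V. (G' V ** H Z + G Z ** H' V) $ i $ j)) (at Z)"
    by (simp add: matrix_matrix_mult_def sum.distrib add.commute)
qed

lemma has_matrix_derivative_row_replace:
  assumes "has_matrix_derivative G G' Z"
  shows "has_matrix_derivative (\<lambda>W. row_replace (G W) r x) (\<lambda>V. row_replace (G' V) r 0) Z"
  unfolding has_matrix_derivative_def row_replace_def
proof (intro allI)
  fix i j
  show "((\<lambda>W. (\<chi> k. if k = r then x else G W $ k) $ i $ j) has_derivative
      (\<lambda>V. (\<chi> k. if k = r then 0 else G' V $ k) $ i $ j)) (at Z)"
    using has_matrix_derivativeD[OF assms] by (cases "i = r") auto
qed

definition det_differential :: "'a::comm_ring_1^'k^'k \<Rightarrow> 'a^'k^'k \<Rightarrow> 'a" where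
  "det_differential M N = (\<Sum>r\<in>UNIV. det (row_replace M r (N $ r)))"

lemma det_differential_eq_trace:
  fixes M :: "'a::field^'k^'k"
  assumes "det M \<noteq> 0"
  shows "det_differential M N = det M * trace (matrix_inv M ** N)"
  unfolding det_differential_def det_row_replace_expand cofactor_eq_det_matrix_inv[OF assms]
    trace_def matrix_matrix_mult_def
  by (subst sum.swap) (simp add: sum_distrib_left mult_ac)

lemma has_derivative_det:
  fixes G :: "'x::real_normed_vector \<Rightarrow> 'a::real_normed_field^'k^'k"
  assumes "has_matrix_derivative G G' Z"
  shows "((\<lambda>W. det (G W)) has_derivative (\<lambda>V. det_differential (G Z) (G' V))) (at Z)"
proof -
  have e: "\<And>i j. ((\<lambda>W. G W $ i $ j) has_derivative (\<lambda>V. G' V $ i $ j)) (at Z)"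
    using assms unfolding has_matrix_derivative_def by blast
  have "((\<lambda>W. \<Sum>p\<in>{p. p permutes (UNIV::'k set)}. of_int (sign p) * (\<Prod>i\<in>UNIV. G W $ i $ p i))
     has_derivative (\<lambda>V. \<Sum>p\<in>{p. p permutes (UNIV::'k set)}. of_int (sign p) *
        (\<Sum>i\<in>UNIV. G' V $ i $ p i * (\<Prod>j\<in>UNIV - {i}. G Z $ j $ p j)))) (at Z)"
    by (intro has_derivative_sum has_derivative_mult_right has_derivative_prod e)
  moreover have "(\<lambda>V. \<Sum>p\<in>{p. p permutes (UNIV::'k set)}. of_int (sign p) *
        (\<Sum>i\<in>UNIV. G' V $ i $ p i * (\<Prod>j\<in>UNIV - {i}. G Z $ j $ p j))) = (\<lambda>V. det_differential (G Z) (G' V))"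
  proof
    fix V
    have "det_differential (G Z) (G' V) = (\<Sum>r\<in>UNIV. \<Sum>p\<in>{p. p permutes (UNIV::'k set)}. of_int (sign p) *
        ((\<Prod>j\<in>UNIV - {r}. G Z $ j $ p j) * G' V $ r $ p r))"
      unfolding det_differential_def det_def
    proof (intro sum.cong refl)
      fix r p
      have "(\<Prod>i\<in>UNIV. row_replace (G Z) r (G' V $ r) $ i $ p i) =
            row_replace (G Z) r (G' V $ r) $ r $ p r * (\<Prod>i\<in>UNIV-{r}. row_replace (G Z) r (G' V $ r) $ i $ p i)"
        by (simp add: prod.remove)
      also have "\<dots> = G' V $ r $ p r * (\<Prod>j\<in>UNIV - {r}. G Z $ j $ p j)"
        by (simp add: row_replace_def)
      finally show "of_int (sign p) * (\<Prod>i\<in>UNIV. row_replace (G Z) r (G' V $ r) $ i $ p i) =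
         of_int (sign p) * ((\<Prod>j\<in>UNIV - {r}. G Z $ j $ p j) * G' V $ r $ p r)"
        by (simp add: mult.commute)
    qed
    also have "\<dots> = (\<Sum>p\<in>{p. p permutes (UNIV::'k set)}. of_int (sign p) *
        (\<Sum>i\<in>UNIV. G' V $ i $ p i * (\<Prod>j\<in>UNIV - {i}. G Z $ j $ p j)))"
      by (subst sum.swap) (simp add: sum_distrib_left mult.commute)
    finally show "(\<Sum>p\<in>{p. p permutes (UNIV::'k set)}. of_int (sign p) *
        (\<Sum>i\<in>UNIV. G' V $ i $ p i * (\<Prod>j\<in>UNIV - {i}. G Z $ j $ p j))) = det_differential (G Z) (G' V)" by simp
  qed
  ultimately show ?thesis unfolding det_def by simp
qed

lemma has_derivative_det_trace:
  fixes G :: "'x::real_normed_vector \<Rightarrow> 'a::real_normed_field^'k^'k"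
  assumes "has_matrix_derivative G G' W" "det (G W) \<noteq> 0"
  shows "((\<lambda>X. det (G X)) has_derivative (\<lambda>V. det (G W) * trace (matrix_inv (G W) ** G' V))) (at W)"
  using has_derivative_det[OF assms(1)] det_differential_eq_trace[OF assms(2)] by simp

lemma eventually_det_nonzero:
  assumes "has_matrix_derivative G G' Z" "det (G Z) \<noteq> 0"
  shows "\<forall>\<^sub>F W in at Z. det (G W) \<noteq> 0"
  using has_derivative_continuous[OF has_derivative_det[OF assms(1)]] assms(2)
  by (simp add: isCont_def tendsto_imp_eventually_ne)

lemma differentiable_matrix_inv_nth:
  fixes G :: "'x::real_normed_vector \<Rightarrow> 'a::real_normed_field^'k^'k"
  assumes G: "has_matrix_derivative G G' Z" and nz: "det (G Z) \<noteq> 0"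
  shows "(\<lambda>W. matrix_inv (G W) $ c $ r) differentiable (at Z)"
proof -
  have "((\<lambda>W. cofactor (G W) r c) has_derivative
      (\<lambda>V. det_differential (row_replace (G Z) r (axis c 1)) (row_replace (G' V) r 0))) (at Z)"
    unfolding cofactor_def by (rule has_derivative_det[OF has_matrix_derivative_row_replace[OF G]])
  then obtain D where "((\<lambda>W. cofactor (G W) r c / det (G W)) has_derivative D) (at Z)"
    using has_derivative_divide'[OF _ has_derivative_det[OF G] nz] by blast
  moreover have "\<forall>\<^sub>F W in at Z. cofactor (G W) r c / det (G W) = matrix_inv (G W) $ c $ r"
    using eventually_det_nonzero[OF G nz] by eventually_elim (simp add: cofactor_eq_det_matrix_inv)
  ultimately have "((\<lambda>W. matrix_inv (G W) $ c $ r) has_derivative D) (at Z)"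
    by (rule has_derivative_transform_eventually) (simp_all add: nz cofactor_eq_det_matrix_inv)
  then show ?thesis unfolding differentiable_def by blast
qed

lemma has_matrix_derivative_matrix_inv:
  fixes G :: "'x::real_normed_vector \<Rightarrow> 'a::real_normed_field^'k^'k"
  assumes G: "has_matrix_derivative G G' Z" and nz: "det (G Z) \<noteq> 0"
  shows "has_matrix_derivative (\<lambda>W. matrix_inv (G W))
    (\<lambda>V. - (matrix_inv (G Z) ** G' V ** matrix_inv (G Z))) Z"
proof -
  let ?A = "matrix_inv (G Z)"
  obtain d where d: "\<And>c r. ((\<lambda>W. matrix_inv (G W) $ c $ r) has_derivative d c r) (at Z)"
    using differentiable_matrix_inv_nth[OF G nz] unfolding differentiable_def by metis
  define A' where "A' = (\<lambda>V. (\<chi> c r. d c r V) :: 'a^'k^'k)"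
  have A': "has_matrix_derivative (\<lambda>W. matrix_inv (G W)) A' Z"
    unfolding has_matrix_derivative_def A'_def using d by simp
  have invZ: "invertible (G Z)" using nz invertible_det_nz by blast
  \<comment> \<open>differentiate \<open>G W ** matrix_inv (G W) = mat 1\<close>, which holds near \<open>Z\<close>\<close>
  have zero: "G' V ** ?A + G Z ** A' V = 0" for V
  proof -
    have "(G' V ** ?A + G Z ** A' V) $ i $ k = 0" for i k
    proof -
      have "((\<lambda>W. (G W ** matrix_inv (G W)) $ i $ k) has_derivative
          (\<lambda>V. (G' V ** ?A + G Z ** A' V) $ i $ k)) (at Z)"
        by (rule has_matrix_derivativeD[OF has_matrix_derivative_mult[OF G A']])
      moreover have "((\<lambda>W. (G W ** matrix_inv (G W)) $ i $ k) has_derivative (\<lambda>V. 0)) (at Z)"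
      proof (rule has_derivative_transform_eventually[OF has_derivative_const])
        show "\<forall>\<^sub>F W in at Z. (mat 1 :: 'a^'k^'k) $ i $ k = (G W ** matrix_inv (G W)) $ i $ k"
          using eventually_det_nonzero[OF G nz]
          by eventually_elim (simp add: invertible_det_nz invertible_matrix_inv_mul)
      qed (use invZ in \<open>simp_all add: invertible_matrix_inv_mul\<close>)
      ultimately have "(\<lambda>V. (G' V ** ?A + G Z ** A' V) $ i $ k) = (\<lambda>V. 0)"
        by (rule has_derivative_unique)
      then show ?thesis by meson
    qed
    then show ?thesis by (simp add: vec_eq_iff)
  qed
  have "A' V = - (?A ** G' V ** ?A)" for V
  proof -
    have "A' V = ?A ** (G Z ** A' V)"
      by (simp add: matrix_mul_assoc invertible_matrix_inv_mul(2)[OF invZ])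
    also have "G Z ** A' V = - (G' V ** ?A)" using zero[of V] by (simp add: add_eq_0_iff)
    finally show ?thesis by (simp add: matrix_mul_assoc matrix_mul_uminus_right matrix_mul_uminus_left)
  qed
  then have "A' = (\<lambda>V. - (?A ** G' V ** ?A))" by auto
  then show ?thesis using A' by simp
qed

section \<open>Wirtinger derivatives\<close>

lemma dirD_eq_derivative:
  assumes "(f has_derivative f') (at W)"
  shows "dirD V f W = f' V"
proof -
  have "((\<lambda>t::real. W + t *\<^sub>R V) has_derivative (\<lambda>t. t *\<^sub>R V)) (at 0)"
    by (auto intro!: derivative_eq_intros)
  from has_derivative_compose[OF this, of f f'] assms
  have "((\<lambda>t. f (W + t *\<^sub>R V)) has_derivative (\<lambda>t. f' (t *\<^sub>R V))) (at 0)" by simp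
  also have "(\<lambda>t. f' (t *\<^sub>R V)) = (\<lambda>t. t *\<^sub>R f' V)"
    using has_derivative_linear[OF assms] by (simp add: linear_scale)
  finally have "((\<lambda>t. f (W + t *\<^sub>R V)) has_vector_derivative f' V) (at 0)"
    by (simp add: has_vector_derivative_def)
  then show ?thesis unfolding dirD_def by (rule vector_derivative_at)
qed

definition dz_linear :: "'m \<Rightarrow> 'n \<Rightarrow> (complex^'n^'m \<Rightarrow> complex) \<Rightarrow> complex" where
  "dz_linear i a f' = (f' (Emat 1 i a) - \<i> * f' (Emat \<i> i a)) / 2"

definition dzbar_linear :: "'m \<Rightarrow> 'n \<Rightarrow> (complex^'n^'m \<Rightarrow> complex) \<Rightarrow> complex" where
  "dzbar_linear i a f' = (f' (Emat 1 i a) + \<i> * f' (Emat \<i> i a)) / 2"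

lemma dz_eq_dz_linear: "(f has_derivative f') (at W) \<Longrightarrow> dz i a f W = dz_linear i a f'"
  by (simp add: dz_def dz_linear_def dirD_eq_derivative)

lemma dzbar_eq_dzbar_linear: "(f has_derivative f') (at W) \<Longrightarrow> dzbar i a f W = dzbar_linear i a f'"
  by (simp add: dzbar_def dzbar_linear_def dirD_eq_derivative)

lemma dz_dzbar_linear_of_Emat:
  assumes "\<And>c. f' (Emat c k b) = c * t1 + cnj c * t2"
  shows "dz_linear k b f' = t1" "dzbar_linear k b f' = t2"
  unfolding dz_linear_def dzbar_linear_def assms by (simp_all add: field_simps)

section \<open>The defect matrices and the logarithm of \<open>P\<^sub>j\<close>\<close>

definition defect :: "complex^'n^'m \<Rightarrow> complex^'m^'m" where
  "defect W = mat 1 - W ** ctrans W"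

definition defect_deriv :: "complex^'n^'m \<Rightarrow> complex^'n^'m \<Rightarrow> complex^'m^'m" where
  "defect_deriv W V = - (V ** ctrans W + W ** ctrans V)"

definition cross_defect :: "complex^'n^'m \<Rightarrow> complex^'n^'m \<Rightarrow> complex^'m^'m" where
  "cross_defect U W = mat 1 - W ** ctrans U"

definition cross_defect_deriv :: "complex^'n^'m \<Rightarrow> complex^'n^'m \<Rightarrow> complex^'m^'m" where
  "cross_defect_deriv U V = - (V ** ctrans U)"

lemma has_matrix_derivative_defect: "has_matrix_derivative defect (defect_deriv W) W"
proof -
  have "has_matrix_derivative (\<lambda>X. mat 1 - X ** ctrans X) (\<lambda>V. 0 - (V ** ctrans W + W ** ctrans V)) W"
    by (intro has_matrix_derivative_diff has_matrix_derivative_const has_matrix_derivative_mult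
        has_matrix_derivative_id has_matrix_derivative_ctrans)
  then show ?thesis by (simp add: defect_def[abs_def] defect_deriv_def[abs_def])
qed

lemma has_matrix_derivative_cross_defect: "has_matrix_derivative (cross_defect U) (cross_defect_deriv U) W"
proof -
  have "has_matrix_derivative (\<lambda>X. mat 1 - X ** ctrans U) (\<lambda>V. 0 - (V ** ctrans U + W ** 0)) W"
    by (intro has_matrix_derivative_diff has_matrix_derivative_const has_matrix_derivative_mult
        has_matrix_derivative_id)
  then show ?thesis by (simp add: cross_defect_def[abs_def] cross_defect_deriv_def[abs_def])
qed

lemma trace_mul_defect_deriv_Emat:
  "trace (A ** defect_deriv W (Emat c k b)) = - (c * (ctrans W ** A) $ b $ k + cnj c * (A ** W) $ k $ b)"
  unfolding defect_deriv_def ctrans_Emat matrix_mul_uminus_right matrix_add_ldistrib trace_uminus trace_add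
    trace_mul_Emat_mul trace_mul_mul_Emat
  by simp

lemma trace_mul_cross_defect_deriv_Emat:
  "trace (H ** cross_defect_deriv U (Emat c k b)) = - (c * (ctrans U ** H) $ b $ k)"
  unfolding cross_defect_deriv_def matrix_mul_uminus_right trace_uminus trace_mul_Emat_mul by simp

lemma det_defect_real: "det (defect W) = complex_of_real (Re (det (defect W)))"
proof -
  have "ctrans (defect W) = defect W"
    by (simp add: defect_def ctrans_diff ctrans_matrix_mul)
  then have "cnj (det (defect W)) = det (defect W)"
    using det_ctrans[of "defect W"] by simp
  then show ?thesis by (metis Reals_cnj_iff complex_is_Real_iff of_real_Re)
qed

definition defect_domain :: "(complex^'n^'m) set" where
  "defect_domain = {W. 0 < Re (det (defect W))}"

definition poisson_domain :: "complex^'n^'m \<Rightarrow> (complex^'n^'m) set" where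
  "poisson_domain U = {W \<in> defect_domain. det (cross_defect U W) \<noteq> 0}"

lemma continuous_on_det_defect: "continuous_on UNIV (\<lambda>X. det (defect X))"
  by (rule has_derivative_continuous_on[OF has_derivative_at_withinI[OF has_derivative_det]])
    (rule has_matrix_derivative_defect)

lemma open_defect_domain: "open defect_domain"
  unfolding defect_domain_def
  by (auto intro!: open_Collect_less continuous_intros continuous_on_det_defect)

lemma open_poisson_domain: "open (poisson_domain U)"
proof -
  have "continuous_on UNIV (\<lambda>X. det (cross_defect U X))"
    by (rule has_derivative_continuous_on[OF has_derivative_at_withinI[OF has_derivative_det]])
      (rule has_matrix_derivative_cross_defect)
  then have "open {W. det (cross_defect U W) \<noteq> 0}"
    by (auto intro!: open_Collect_neq continuous_intros)
  then show ?thesis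
    unfolding poisson_domain_def using open_defect_domain by (auto simp: Collect_conj_eq)
qed

definition defect_inv :: "complex^'n^'m \<Rightarrow> complex^'m^'m" where
  "defect_inv W = matrix_inv (defect W)"

definition cross_defect_inv :: "complex^'n^'m \<Rightarrow> complex^'n^'m \<Rightarrow> complex^'m^'m" where
  "cross_defect_inv U W = matrix_inv (cross_defect U W)"

lemma mult_cnj_notin_nonpos_Reals: "z \<noteq> 0 \<Longrightarrow> z * cnj z \<notin> \<real>\<^sub>\<le>\<^sub>0"
  by (simp add: complex_norm_square[symmetric] complex_nonpos_Reals_iff)

lemma Ln_mult_cnj: "z \<noteq> 0 \<Longrightarrow> Ln (z * cnj z) = of_real (2 * ln (cmod z))"
  by (simp add: complex_norm_square[symmetric] Ln_of_real ln_realpow flip: of_real_power)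

lemma Ln_det_defect:
  "W \<in> defect_domain \<Longrightarrow> Ln (det (defect W)) = of_real (ln (Re (det (defect W))))"
  by (subst det_defect_real) (simp add: Ln_of_real defect_domain_def)

lemma defect_domainD:
  assumes "W \<in> defect_domain"
  shows "det (defect W) \<notin> \<real>\<^sub>\<le>\<^sub>0" "det (defect W) \<noteq> 0"
  using assms by (subst det_defect_real, auto simp: defect_domain_def nonpos_Reals_def)+

lemma poisson_domainD:
  assumes "W \<in> poisson_domain U"
  shows "W \<in> defect_domain" "det (cross_defect U W) \<noteq> 0"
  using assms by (simp_all add: poisson_domain_def)

lemma defect_inv_mul:
  assumes "det (defect Z) \<noteq> 0"
  shows "defect_inv Z ** defect Z = mat 1" "defect Z ** defect_inv Z = mat 1"
  using invertible_matrix_inv_mul[of "defect Z"] assms invertible_det_nz unfolding defect_inv_def by auto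

lemma cross_defect_inv_mul:
  assumes "det (cross_defect U Z) \<noteq> 0"
  shows "cross_defect_inv U Z ** cross_defect U Z = mat 1" "cross_defect U Z ** cross_defect_inv U Z = mat 1"
  using invertible_matrix_inv_mul[of "cross_defect U Z"] assms invertible_det_nz
  unfolding cross_defect_inv_def by auto

lemma has_matrix_derivative_defect_inv:
  assumes "det (defect Z) \<noteq> 0"
  shows "has_matrix_derivative defect_inv (\<lambda>V. - (defect_inv Z ** defect_deriv Z V ** defect_inv Z)) Z"
  unfolding defect_inv_def[abs_def]
  by (rule has_matrix_derivative_matrix_inv[OF has_matrix_derivative_defect assms])

lemma has_matrix_derivative_cross_defect_inv:
  assumes "det (cross_defect U Z) \<noteq> 0"
  shows "has_matrix_derivative (cross_defect_inv U)
    (\<lambda>V. - (cross_defect_inv U Z ** cross_defect_deriv U V ** cross_defect_inv U Z)) Z"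
  unfolding cross_defect_inv_def[abs_def]
  by (rule has_matrix_derivative_matrix_inv[OF has_matrix_derivative_cross_defect assms])

definition log_poisson :: "complex^'n^'m \<Rightarrow> complex^'n^'m \<Rightarrow> complex" where
  "log_poisson U W = Ln (det (defect W)) - Ln (det (cross_defect U W) * cnj (det (cross_defect U W)))"

definition log_poisson_deriv :: "complex^'n^'m \<Rightarrow> complex^'n^'m \<Rightarrow> complex^'n^'m \<Rightarrow> complex" where
  "log_poisson_deriv U W V = trace (defect_inv W ** defect_deriv W V) -
     (trace (cross_defect_inv U W ** cross_defect_deriv U V) +
      cnj (trace (cross_defect_inv U W ** cross_defect_deriv U V)))"

definition poisson_pow :: "real \<Rightarrow> complex^'n^'m \<Rightarrow> complex^'n^'m \<Rightarrow> complex" where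
  "poisson_pow s U W = exp (of_real s * log_poisson U W)"

definition d_log_poisson :: "complex^'n^'m \<Rightarrow> complex^'n^'m \<Rightarrow> complex^'m^'n" where
  "d_log_poisson U W = ctrans U ** cross_defect_inv U W - ctrans W ** defect_inv W"

definition dbar_log_poisson :: "complex^'n^'m \<Rightarrow> complex^'n^'m \<Rightarrow> complex^'n^'m" where
  "dbar_log_poisson U W = ctrans (cross_defect_inv U W) ** U - defect_inv W ** W"

lemma has_derivative_Ln:
  assumes "(f has_derivative f') (at W)" "f W \<notin> \<real>\<^sub>\<le>\<^sub>0"
  shows "((\<lambda>x. Ln (f x)) has_derivative (\<lambda>v. f' v / f W)) (at W)"
proof -
  have "((\<lambda>x. Ln (f x)) has_derivative (\<lambda>v. inverse (f W) * f' v)) (at W)"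
    using has_derivative_compose[OF assms(1) has_field_derivative_imp_has_derivative[OF has_field_derivative_Ln[OF assms(2)]]] .
  then show ?thesis by (simp add: field_simps)
qed

lemma has_derivative_log_poisson:
  assumes W: "W \<in> poisson_domain U"
  shows "(log_poisson U has_derivative log_poisson_deriv U W) (at W)"
proof -
  note f = poisson_domainD[OF W] and d = defect_domainD[OF poisson_domainD(1)[OF W]]
  let ?D = "det (defect W)" and ?E = "det (cross_defect U W)"
  let ?tD = "\<lambda>V. trace (defect_inv W ** defect_deriv W V)" and ?tE = "\<lambda>V. trace (cross_defect_inv U W ** cross_defect_deriv U V)"
  have dD: "((\<lambda>X. det (defect X)) has_derivative (\<lambda>V. ?D * ?tD V)) (at W)"
    unfolding defect_inv_def by (rule has_derivative_det_trace[OF has_matrix_derivative_defect d(2)])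
  have dE: "((\<lambda>X. det (cross_defect U X)) has_derivative (\<lambda>V. ?E * ?tE V)) (at W)"
    unfolding cross_defect_inv_def by (rule has_derivative_det_trace[OF has_matrix_derivative_cross_defect f(2)])
  have dEE: "((\<lambda>X. det (cross_defect U X) * cnj (det (cross_defect U X))) has_derivative
      (\<lambda>V. ?E * cnj (?E * ?tE V) + ?E * ?tE V * cnj ?E)) (at W)"
    by (rule has_derivative_mult[OF dE has_derivative_cnj[OF dE]])
  have "(log_poisson U has_derivative (\<lambda>V. ?D * ?tD V / ?D -
        (?E * cnj (?E * ?tE V) + ?E * ?tE V * cnj ?E) / (?E * cnj ?E))) (at W)"
    unfolding log_poisson_def[abs_def]
    by (rule has_derivative_diff[OF has_derivative_Ln[OF dD d(1)] has_derivative_Ln[OF dEE mult_cnj_notin_nonpos_Reals[OF f(2)]]])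
  moreover have "(\<lambda>V. ?D * ?tD V / ?D -
        (?E * cnj (?E * ?tE V) + ?E * ?tE V * cnj ?E) / (?E * cnj ?E)) = log_poisson_deriv U W"
  proof
    fix V
    have "cnj ?E \<noteq> 0" using f(2) by simp
    then show "?D * ?tD V / ?D -
        (?E * cnj (?E * ?tE V) + ?E * ?tE V * cnj ?E) / (?E * cnj ?E) = log_poisson_deriv U W V"
      unfolding log_poisson_deriv_def using d(2) f(2) by (simp add: field_simps)
  qed
  ultimately show ?thesis by simp
qed

lemma log_poisson_deriv_Emat:
  assumes W: "W \<in> poisson_domain U"
  shows "log_poisson_deriv U W (Emat c k b) = c * d_log_poisson U W $ b $ k + cnj c * dbar_log_poisson U W $ k $ b"
proof -
  have "cnj ((ctrans U ** cross_defect_inv U W) $ b $ k) = (ctrans (cross_defect_inv U W) ** U) $ k $ b"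
    using ctrans_matrix_mul[of "ctrans U" "cross_defect_inv U W"] by (simp add: ctrans_def vec_eq_iff)
  then show ?thesis
    unfolding log_poisson_deriv_def trace_mul_defect_deriv_Emat trace_mul_cross_defect_deriv_Emat d_log_poisson_def dbar_log_poisson_def
    by (simp add: algebra_simps)
qed

lemma has_derivative_poisson_pow:
  assumes W: "W \<in> poisson_domain U"
  shows "(poisson_pow s U has_derivative (\<lambda>V. poisson_pow s U W * (of_real s * log_poisson_deriv U W V))) (at W)"
proof -
  have "((\<lambda>X. of_real s * log_poisson U X) has_derivative (\<lambda>V. of_real s * log_poisson_deriv U W V)) (at W)"
    by (rule has_derivative_mult_right[OF has_derivative_log_poisson[OF W]])
  from has_derivative_compose[OF this has_field_derivative_imp_has_derivative[OF DERIV_exp]]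
  show ?thesis unfolding poisson_pow_def[abs_def] by simp
qed

lemma Pj_eq_poisson_pow:
  fixes U W :: "complex^'n^'m"
  assumes W: "W \<in> poisson_domain U"
  shows "complex_of_real (Pj j U W) = poisson_pow (real CARD('n) / real j) U W"
proof -
  let ?s = "real CARD('n) / real j"
  let ?r = "Re (det (defect W))" and ?e = "cmod (det (cross_defect U W))"
  have r: "0 < ?r" and e: "0 < ?e"
    using poisson_domainD[OF W] by (simp_all add: defect_domain_def)
  have "Pj j U W = ?r powr ?s / ?e powr (2 * ?s)"
    by (simp add: Pj_def defect_def cross_defect_def)
  also have "\<dots> = exp (?s * (ln ?r - 2 * ln ?e))"
    unfolding powr_def using r e by (simp add: exp_diff[symmetric] algebra_simps)
  finally show ?thesis
    unfolding poisson_pow_def log_poisson_def Ln_det_defect[OF poisson_domainD(1)[OF W]]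
      Ln_mult_cnj[OF poisson_domainD(2)[OF W]]
    by (simp add: exp_of_real[symmetric] algebra_simps)
qed

lemma has_derivative_Pj:
  fixes U W :: "complex^'n^'m"
  assumes W: "W \<in> poisson_domain U"
  shows "((\<lambda>X. complex_of_real (Pj j U X)) has_derivative
     (\<lambda>V. poisson_pow (real CARD('n) / real j) U W *
       (of_real (real CARD('n) / real j) * log_poisson_deriv U W V))) (at W)"
  by (rule has_derivative_transform_within_open[OF has_derivative_poisson_pow[OF W] open_poisson_domain W])
    (simp add: Pj_eq_poisson_pow)

lemma dzbar_Pj:
  fixes U W :: "complex^'n^'m"
  assumes W: "W \<in> poisson_domain U"
  shows "dzbar k b (\<lambda>X. complex_of_real (Pj j U X)) W =
     of_real (real CARD('n) / real j) * poisson_pow (real CARD('n) / real j) U W * dbar_log_poisson U W $ k $ b"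
proof -
  define s where "s = (of_real (real CARD('n) / real j) :: complex)"
  define P where "P = poisson_pow (real CARD('n) / real j) U W"
  have "dzbar_linear k b (\<lambda>V. P * (s * log_poisson_deriv U W V)) = P * s * dbar_log_poisson U W $ k $ b"
    by (rule dz_dzbar_linear_of_Emat(2)[of _ _ _ "P * s * d_log_poisson U W $ b $ k"])
      (simp add: log_poisson_deriv_Emat[OF W] algebra_simps)
  then show ?thesis unfolding s_def P_def
    by (subst dzbar_eq_dzbar_linear[OF has_derivative_Pj[OF W]]) (simp add: mult_ac)
qed

section \<open>The Bergman metric and the complex Hessian of \<open>P\<^sub>j\<close>\<close>

definition defect_adj_inv :: "complex^'n^'m \<Rightarrow> complex^'n^'n" where
  "defect_adj_inv W = mat 1 + ctrans W ** (defect_inv W ** W)"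

lemma defect_inv_mul_deriv_Emat:
  "((- (defect_inv Z ** defect_deriv Z (Emat c i a) ** defect_inv Z)) ** Z + defect_inv Z ** Emat c i a) $ k $ b =
     c * (defect_inv Z $ k $ i * defect_adj_inv Z $ a $ b) +
     cnj c * ((defect_inv Z ** Z) $ k $ a * (defect_inv Z ** Z) $ i $ b)"
proof -
  have e: "(- (defect_inv Z ** defect_deriv Z (Emat c i a) ** defect_inv Z)) ** Z =
      defect_inv Z ** (Emat c i a ** (ctrans Z ** (defect_inv Z ** Z))) +
      (defect_inv Z ** Z) ** (Emat (cnj c) a i ** (defect_inv Z ** Z))"
    unfolding defect_deriv_def ctrans_Emat matrix_mul_uminus_right matrix_mul_uminus_left
      matrix_mul_add_left matrix_add_ldistrib
    by (simp add: matrix_mul_assoc)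
  show ?thesis
    unfolding matrix_mul_add_left vector_add_component e matrix_mul_Emat_mul_nth matrix_mul_Emat_nth
      defect_adj_inv_def
    by (simp add: mat_def algebra_simps)
qed

lemma logKI_eq_Ln_det_defect:
  fixes W :: "complex^'n^'m"
  assumes "W \<in> defect_domain"
  shows "logKI W = - of_nat (CARD('m) + CARD('n)) * Ln (det (defect W))"
  unfolding logKI_def defect_def[symmetric] Ln_det_defect[OF assms] by simp

lemma has_derivative_logKI:
  fixes W :: "complex^'n^'m"
  assumes W: "W \<in> defect_domain"
  shows "(logKI has_derivative
    (\<lambda>V. - of_nat (CARD('m) + CARD('n)) * trace (defect_inv W ** defect_deriv W V))) (at W)"
proof -
  note d = defect_domainD[OF W]
  have "((\<lambda>X. det (defect X)) has_derivative
      (\<lambda>V. det (defect W) * trace (defect_inv W ** defect_deriv W V))) (at W)"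
    unfolding defect_inv_def by (rule has_derivative_det_trace[OF has_matrix_derivative_defect d(2)])
  from has_derivative_mult_right[OF has_derivative_Ln[OF this d(1)], of "- of_nat (CARD('m) + CARD('n))"]
  have "((\<lambda>X. - of_nat (CARD('m) + CARD('n)) * Ln (det (defect X))) has_derivative
     (\<lambda>V. - of_nat (CARD('m) + CARD('n)) * trace (defect_inv W ** defect_deriv W V))) (at W)"
    using d(2) by simp
  then show ?thesis
    by (rule has_derivative_transform_within_open[OF _ open_defect_domain W])
      (simp add: logKI_eq_Ln_det_defect)
qed

lemma dzbar_logKI:
  fixes W :: "complex^'n^'m"
  assumes "W \<in> defect_domain"
  shows "dzbar k b logKI W = of_nat (CARD('m) + CARD('n)) * (defect_inv W ** W) $ k $ b"
proof -
  let ?c = "of_nat (CARD('m) + CARD('n)) :: complex"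
  have "dzbar_linear k b (\<lambda>V. - ?c * trace (defect_inv W ** defect_deriv W V)) = ?c * (defect_inv W ** W) $ k $ b"
    by (rule dz_dzbar_linear_of_Emat(2)[of _ _ _ "?c * (ctrans W ** defect_inv W) $ b $ k"])
      (simp add: trace_mul_defect_deriv_Emat algebra_simps)
  then show ?thesis by (subst dzbar_eq_dzbar_linear[OF has_derivative_logKI[OF assms]])
qed

lemma TI_nth:
  fixes Z :: "complex^'n^'m"
  assumes Z: "Z \<in> defect_domain"
  shows "TI Z $ p $ q = of_nat (CARD('m) + CARD('n)) *
    (defect_inv Z $ fst q $ fst p * defect_adj_inv Z $ snd p $ snd q)"
proof -
  obtain i a k b where pq: "p = (i, a)" "q = (k, b)" by fastforce
  let ?c = "of_nat (CARD('m) + CARD('n)) :: complex"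
  let ?D = "\<lambda>V. ((- (defect_inv Z ** defect_deriv Z V ** defect_inv Z)) ** Z + defect_inv Z ** V) $ k $ b"
  have "((\<lambda>W. (defect_inv W ** W) $ k $ b) has_derivative ?D) (at Z)"
    by (rule has_matrix_derivativeD[OF has_matrix_derivative_mult[OF
          has_matrix_derivative_defect_inv[OF defect_domainD(2)[OF Z]] has_matrix_derivative_id]])
  from has_derivative_mult_right[OF this, of ?c]
  have "(dzbar k b logKI has_derivative (\<lambda>V. ?c * ?D V)) (at Z)"
    by (rule has_derivative_transform_within_open[OF _ open_defect_domain Z]) (simp add: dzbar_logKI)
  then have "dz i a (dzbar k b logKI) Z = dz_linear i a (\<lambda>V. ?c * ?D V)"
    by (rule dz_eq_dz_linear)
  also have "\<dots> = ?c * (defect_inv Z $ k $ i * defect_adj_inv Z $ a $ b)"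
    by (rule dz_dzbar_linear_of_Emat(1)[of _ _ _ _ "?c * ((defect_inv Z ** Z) $ k $ a * (defect_inv Z ** Z) $ i $ b)"])
      (simp only: defect_inv_mul_deriv_Emat distrib_left mult_ac)
  finally show ?thesis unfolding TI_def cHess_def pq by simp
qed

definition dbar_log_poisson_deriv ::
  "complex^'n^'m \<Rightarrow> complex^'n^'m \<Rightarrow> complex^'n^'m \<Rightarrow> complex^'n^'m" where
  "dbar_log_poisson_deriv U Z V =
     ctrans (- (cross_defect_inv U Z ** cross_defect_deriv U V ** cross_defect_inv U Z)) ** U -
     ((- (defect_inv Z ** defect_deriv Z V ** defect_inv Z)) ** Z + defect_inv Z ** V)"

lemma has_matrix_derivative_dbar_log_poisson:
  assumes "Z \<in> poisson_domain U"
  shows "has_matrix_derivative (dbar_log_poisson U) (dbar_log_poisson_deriv U Z) Z"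
  using has_matrix_derivative_diff[OF has_matrix_derivative_mult[OF has_matrix_derivative_ctrans[OF
        has_matrix_derivative_cross_defect_inv[OF poisson_domainD(2)[OF assms]]] has_matrix_derivative_const]
      has_matrix_derivative_mult[OF has_matrix_derivative_defect_inv[OF
        defect_domainD(2)[OF poisson_domainD(1)[OF assms]]] has_matrix_derivative_id]]
  unfolding dbar_log_poisson_def[abs_def] dbar_log_poisson_deriv_def[abs_def] by simp

lemma dbar_log_poisson_deriv_Emat:
  "dbar_log_poisson_deriv U Z (Emat c i a) $ k $ b =
     cnj c * ((ctrans (cross_defect_inv U Z) ** U) $ k $ a * (ctrans (cross_defect_inv U Z) ** U) $ i $ b) -
     (c * (defect_inv Z $ k $ i * defect_adj_inv Z $ a $ b) +
      cnj c * ((defect_inv Z ** Z) $ k $ a * (defect_inv Z ** Z) $ i $ b))"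
proof -
  have "ctrans (- (cross_defect_inv U Z ** cross_defect_deriv U (Emat c i a) ** cross_defect_inv U Z)) ** U =
      (ctrans (cross_defect_inv U Z) ** U) ** (Emat (cnj c) a i ** (ctrans (cross_defect_inv U Z) ** U))"
    unfolding cross_defect_deriv_def matrix_mul_uminus_right matrix_mul_uminus_left ctrans_uminus
      ctrans_matrix_mul ctrans_Emat ctrans_ctrans
    by (simp add: matrix_mul_assoc)
  then show ?thesis
    unfolding dbar_log_poisson_deriv_def vector_minus_component defect_inv_mul_deriv_Emat
    by (simp add: matrix_mul_Emat_mul_nth algebra_simps)
qed

lemma has_derivative_dzbar_Pj:
  fixes U Z :: "complex^'n^'m" and j :: nat
  assumes Z: "Z \<in> poisson_domain U"
  defines "s \<equiv> of_real (real CARD('n) / real j) :: complex"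
    and "P \<equiv> poisson_pow (real CARD('n) / real j) U Z"
  shows "(dzbar k b (\<lambda>X. complex_of_real (Pj j U X)) has_derivative
    (\<lambda>V. s * P * dbar_log_poisson_deriv U Z V $ k $ b +
         s * (P * (s * log_poisson_deriv U Z V)) * dbar_log_poisson U Z $ k $ b)) (at Z)"
proof -
  have "((\<lambda>W. s * poisson_pow (real CARD('n) / real j) U W) has_derivative
      (\<lambda>V. s * (P * (s * log_poisson_deriv U Z V)))) (at Z)"
    unfolding s_def P_def by (rule has_derivative_mult_right[OF has_derivative_poisson_pow[OF Z]])
  from has_derivative_mult[OF this has_matrix_derivativeD[OF has_matrix_derivative_dbar_log_poisson[OF Z]]]
  have "((\<lambda>W. s * poisson_pow (real CARD('n) / real j) U W * dbar_log_poisson U W $ k $ b) has_derivative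
    (\<lambda>V. s * P * dbar_log_poisson_deriv U Z V $ k $ b +
         s * (P * (s * log_poisson_deriv U Z V)) * dbar_log_poisson U Z $ k $ b)) (at Z)"
    by (simp add: P_def)
  then show ?thesis
    by (rule has_derivative_transform_within_open[OF _ open_poisson_domain Z]) (simp add: dzbar_Pj s_def)
qed

lemma cHess_Pj_nth:
  fixes U Z :: "complex^'n^'m" and j :: nat
  assumes Z: "Z \<in> poisson_domain U"
  defines "s \<equiv> of_real (real CARD('n) / real j) :: complex"
    and "P \<equiv> poisson_pow (real CARD('n) / real j) U Z"
  shows "cHess (\<lambda>X. complex_of_real (Pj j U X)) Z $ p $ q =
    s * P * (s * d_log_poisson U Z $ snd p $ fst p * dbar_log_poisson U Z $ fst q $ snd q -
             defect_inv Z $ fst q $ fst p * defect_adj_inv Z $ snd p $ snd q)"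
proof -
  obtain i a k b where pq: "p = (i, a)" "q = (k, b)" by fastforce
  have "dz i a (dzbar k b (\<lambda>X. complex_of_real (Pj j U X))) Z =
      s * P * (s * d_log_poisson U Z $ a $ i * dbar_log_poisson U Z $ k $ b -
               defect_inv Z $ k $ i * defect_adj_inv Z $ a $ b)"
    unfolding dz_eq_dz_linear[OF has_derivative_dzbar_Pj[OF Z]] s_def[symmetric] P_def[symmetric]
    by (rule dz_dzbar_linear_of_Emat(1)[of _ _ _ _ "s * P *
         ((ctrans (cross_defect_inv U Z) ** U) $ k $ a * (ctrans (cross_defect_inv U Z) ** U) $ i $ b -
          (defect_inv Z ** Z) $ k $ a * (defect_inv Z ** Z) $ i $ b) +
         s * (P * (s * dbar_log_poisson U Z $ i $ a)) * dbar_log_poisson U Z $ k $ b"])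
      (simp only: dbar_log_poisson_deriv_Emat log_poisson_deriv_Emat[OF Z], simp add: algebra_simps)
  then show ?thesis unfolding cHess_def pq by simp
qed

section \<open>The operator \<open>L(P\<^sub>j)\<close> is a scalar plus a rank-one matrix\<close>

lemma gradient_identity_left:
  fixes U Z :: "complex^'n^'m" and A H :: "complex^'m^'m"
  assumes AM: "A ** (mat 1 - Z ** ctrans Z) = mat 1"
    and HG: "ctrans H ** (mat 1 - U ** ctrans Z) = mat 1"
  shows "(ctrans H ** U - A ** Z) ** (mat 1 - ctrans Z ** Z) = ctrans H ** (U - Z)"
proof -
  let ?N = "mat 1 - ctrans Z ** Z"
  have AZN: "A ** Z ** ?N = Z"
  proof -
    have "A ** Z ** ?N = A ** ((mat 1 - Z ** ctrans Z) ** Z)"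
      by (simp add: matrix_mul_assoc matrix_mul_diff_right matrix_mul_diff_left)
    also have "\<dots> = Z" by (simp add: matrix_mul_assoc AM)
    finally show ?thesis .
  qed
  have HUZZ: "ctrans H ** U ** ctrans Z ** Z = ctrans H ** Z - Z"
  proof -
    have "ctrans H ** ((mat 1 - U ** ctrans Z) ** Z) = Z" by (simp add: matrix_mul_assoc HG)
    moreover have "ctrans H ** ((mat 1 - U ** ctrans Z) ** Z) = ctrans H ** Z - ctrans H ** U ** ctrans Z ** Z"
      by (simp add: matrix_mul_diff_left matrix_mul_diff_right matrix_mul_assoc)
    ultimately show ?thesis by (simp add: algebra_simps)
  qed
  have "(ctrans H ** U - A ** Z) ** ?N = ctrans H ** U - ctrans H ** U ** ctrans Z ** Z - A ** Z ** ?N"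
    by (simp add: matrix_mul_diff_left matrix_mul_diff_right matrix_mul_assoc)
  also have "\<dots> = ctrans H ** (U - Z)"
    unfolding HUZZ AZN by (simp add: matrix_mul_diff_right algebra_simps)
  finally show ?thesis .
qed

lemma gradient_identity_right:
  fixes U Z :: "complex^'n^'m" and A H :: "complex^'m^'m"
  assumes UU: "U ** ctrans U = mat 1"
    and AM: "A ** (mat 1 - Z ** ctrans Z) = mat 1"
    and FH: "(mat 1 - Z ** ctrans U) ** H = mat 1"
  shows "(U - Z) ** (ctrans U ** H - ctrans Z ** A) ** (mat 1 - Z ** ctrans Z) = mat 1 - U ** ctrans Z"
proof -
  let ?M = "mat 1 - Z ** ctrans Z" and ?K = "ctrans U ** H ** (mat 1 - Z ** ctrans Z)"
  have ZUH: "Z ** ctrans U ** H = H - mat 1"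
    using FH by (simp add: matrix_mul_diff_left algebra_simps)
  have "(U - Z) ** (ctrans U ** H - ctrans Z ** A) ** ?M = (U - Z) ** (?K - ctrans Z)"
    by (simp add: matrix_mul_diff_left AM flip: matrix_mul_assoc)
  also have "\<dots> = U ** ?K - U ** ctrans Z - (Z ** ?K - Z ** ctrans Z)"
    by (simp only: matrix_mul_diff_left[of U Z] matrix_mul_diff_right[of U ?K] matrix_mul_diff_right[of Z ?K])
  also have "\<dots> = (U ** ctrans U) ** H ** ?M - U ** ctrans Z - (Z ** ctrans U ** H) ** ?M + Z ** ctrans Z"
    by (simp add: matrix_mul_assoc)
  also have "\<dots> = mat 1 - U ** ctrans Z"
    unfolding UU ZUH by (simp add: matrix_mul_diff_left algebra_simps)
  finally show ?thesis .
qed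

text \<open>For \<open>A = defect_inv Z\<close> and \<open>H = cross_defect_inv U Z\<close> the first and third factors are
  \<open>dbar_log_poisson U Z\<close> and \<open>d_log_poisson U Z\<close>. This is the only place where \<open>U U\<^sup>* = I\<close>
  is used.\<close>

lemma gradient_identity:
  fixes U Z :: "complex^'n^'m" and A H :: "complex^'m^'m"
  assumes UU: "U ** ctrans U = mat 1"
    and AM: "A ** (mat 1 - Z ** ctrans Z) = mat 1"
    and FH: "(mat 1 - Z ** ctrans U) ** H = mat 1"
  shows "(ctrans H ** U - A ** Z) ** (mat 1 - ctrans Z ** Z) ** (ctrans U ** H - ctrans Z ** A) **
         (mat 1 - Z ** ctrans Z) = mat 1"
proof -
  have HG: "ctrans H ** (mat 1 - U ** ctrans Z) = mat 1"
    using arg_cong[OF FH, of ctrans] by (simp add: ctrans_matrix_mul ctrans_diff)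
  have "(ctrans H ** U - A ** Z) ** (mat 1 - ctrans Z ** Z) ** (ctrans U ** H - ctrans Z ** A) **
      (mat 1 - Z ** ctrans Z) =
      ctrans H ** ((U - Z) ** (ctrans U ** H - ctrans Z ** A) ** (mat 1 - Z ** ctrans Z))"
    unfolding gradient_identity_left[OF AM HG] by (simp add: matrix_mul_assoc)
  also have "\<dots> = mat 1" unfolding gradient_identity_right[OF UU AM FH] HG ..
  finally show ?thesis .
qed

definition defect_adj :: "complex^'n^'m \<Rightarrow> complex^'n^'n" where
  "defect_adj W = mat 1 - ctrans W ** W"

lemma defect_adj_inv_mul:
  fixes Z :: "complex^'n^'m"
  assumes "det (defect Z) \<noteq> 0"
  shows "defect_adj_inv Z ** defect_adj Z = mat 1"
proof -
  have "defect_adj_inv Z ** defect_adj Z =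
      defect_adj Z + ctrans Z ** (defect_inv Z ** (Z - Z ** ctrans Z ** Z))"
    unfolding defect_adj_inv_def defect_adj_def
    by (simp add: matrix_mul_add_left matrix_mul_diff_right matrix_mul_assoc)
  also have "Z - Z ** ctrans Z ** Z = defect Z ** Z" by (simp add: defect_def matrix_mul_diff_left)
  also have "defect_inv Z ** (defect Z ** Z) = Z"
    by (simp add: matrix_mul_assoc defect_inv_mul[OF assms])
  finally show ?thesis by (simp add: defect_adj_def)
qed

text \<open>\<open>TI Z\<close> is \<open>(m + n)\<close> times the Kronecker product of \<open>defect_inv Z\<close> and \<open>defect_adj_inv Z\<close>,
  so its inverse is the Kronecker product of the two defects, divided by \<open>m + n\<close>.\<close>

definition TI_inverse :: "complex^'n^'m \<Rightarrow> complex^('m \<times> 'n)^('m \<times> 'n)" where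
  "TI_inverse Z = (\<chi> q p. defect Z $ fst p $ fst q * defect_adj Z $ snd q $ snd p / of_nat (CARD('m) + CARD('n)))"

lemma TI_inverse_mul_TI:
  fixes Z :: "complex^'n^'m"
  assumes Z: "Z \<in> defect_domain"
  shows "TI_inverse Z ** TI Z = mat 1"
proof -
  let ?c = "of_nat (CARD('m) + CARD('n)) :: complex"
  have "CARD('m) + CARD('n) \<noteq> 0" using zero_less_card_finite[where 'a='m] by linarith
  then have c: "?c \<noteq> 0" by (simp only: of_nat_eq_0_iff not_False_eq_True)
  have A: "defect_inv Z ** defect Z = mat 1"
    using defect_inv_mul[OF defect_domainD(2)[OF Z]] by simp
  have B: "defect_adj Z ** defect_adj_inv Z = mat 1"
    using defect_adj_inv_mul[OF defect_domainD(2)[OF Z]] matrix_left_right_inverse by blast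
  have "(TI_inverse Z ** TI Z) $ p $ p' =
      (defect_inv Z ** defect Z) $ fst p' $ fst p * (defect_adj Z ** defect_adj_inv Z) $ snd p $ snd p'" for p p'
  proof -
    have "(TI_inverse Z ** TI Z) $ p $ p' = (\<Sum>k\<in>UNIV. \<Sum>b\<in>UNIV.
        (defect Z $ k $ fst p * defect_adj Z $ snd p $ b / ?c) *
        (?c * (defect_inv Z $ fst p' $ k * defect_adj_inv Z $ b $ snd p')))"
      unfolding matrix_mul_nth_prod_index TI_nth[OF Z] TI_inverse_def by simp
    also have "\<dots> = (\<Sum>k\<in>UNIV. defect_inv Z $ fst p' $ k * defect Z $ k $ fst p) *
        (\<Sum>b\<in>UNIV. defect_adj Z $ snd p $ b * defect_adj_inv Z $ b $ snd p')"
      using c by (simp add: sum_product mult_ac)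
    finally show ?thesis by (simp add: matrix_matrix_mult_def)
  qed
  then show ?thesis
    unfolding A B by (auto simp: vec_eq_iff mat_def prod_eq_iff)
qed

lemma matrix_inv_TI: "Z \<in> defect_domain \<Longrightarrow> matrix_inv (TI Z) = TI_inverse Z"
  by (rule matrix_inv_eqI[OF TI_inverse_mul_TI])

lemma Lop_Pj_eq:
  fixes U Z :: "complex^'n^'m" and j :: nat
  assumes Z: "Z \<in> poisson_domain U"
  defines "s \<equiv> of_real (real CARD('n) / real j) :: complex"
    and "P \<equiv> poisson_pow (real CARD('n) / real j) U Z"
    and "c \<equiv> of_nat (CARD('m) + CARD('n)) :: complex"
  shows "Lop (\<lambda>W. complex_of_real (Pj j U W)) Z =
    (\<chi> p q. (if p = q then - (s * P / c) else 0) +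
      s * P * s * (\<Sum>r\<in>UNIV. TI_inverse Z $ p $ r * d_log_poisson U Z $ snd r $ fst r) *
      dbar_log_poisson U Z $ fst q $ snd q)"
proof -
  let ?H = "cHess (\<lambda>W. complex_of_real (Pj j U W)) Z"
  let ?a = "\<lambda>r. d_log_poisson U Z $ snd r $ fst r" and ?b = "\<lambda>q. dbar_log_poisson U Z $ fst q $ snd q"
  have DZ: "Z \<in> defect_domain" using poisson_domainD(1)[OF Z] .
  have "CARD('m) + CARD('n) \<noteq> 0" using zero_less_card_finite[where 'a='m] by linarith
  then have "c \<noteq> 0" unfolding c_def by (simp only: of_nat_eq_0_iff not_False_eq_True)
  then have H: "?H $ r $ q = s * P * s * ?a r * ?b q - (s * P / c) * TI Z $ r $ q" for r q
    unfolding cHess_Pj_nth[OF Z] TI_nth[OF DZ] s_def[symmetric] P_def[symmetric] c_def[symmetric]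
    by (simp add: field_simps)
  have "(TI_inverse Z ** ?H) $ p $ q =
      s * P * s * (\<Sum>r\<in>UNIV. TI_inverse Z $ p $ r * ?a r) * ?b q - (s * P / c) * (TI_inverse Z ** TI Z) $ p $ q"
    for p q
    unfolding matrix_matrix_mult_def H
    by (simp add: sum_subtractf right_diff_distrib sum_distrib_left sum_distrib_right mult_ac)
  then show ?thesis
    unfolding Lop_def matrix_inv_TI[OF DZ] TI_inverse_mul_TI[OF DZ] by (simp add: vec_eq_iff mat_def)
qed

lemma TI_inverse_gradient_pairing:
  fixes U Z :: "complex^'n^'m"
  assumes Z: "Z \<in> poisson_domain U" and UU: "U ** ctrans U = mat 1"
  shows "(\<Sum>p\<in>UNIV. (\<Sum>r\<in>UNIV. TI_inverse Z $ p $ r * d_log_poisson U Z $ snd r $ fst r) *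
      dbar_log_poisson U Z $ fst p $ snd p) = of_nat CARD('m) / of_nat (CARD('m) + CARD('n))"
proof -
  let ?c = "of_nat (CARD('m) + CARD('n)) :: complex"
  let ?Y = "d_log_poisson U Z" and ?Y' = "dbar_log_poisson U Z"
  have inner: "(\<Sum>i\<in>UNIV. \<Sum>a\<in>UNIV. defect Z $ i $ k * defect_adj Z $ b $ a * ?Y $ a $ i / ?c) * ?Y' $ k $ b =
      ?Y' $ k $ b * (defect_adj Z ** (?Y ** defect Z)) $ b $ k / ?c" for k b
    unfolding matrix_matrix_mult_def
    by (subst sum.swap) (simp add: sum_distrib_left sum_distrib_right sum_divide_distrib mult_ac)
  have "(\<Sum>p\<in>UNIV. (\<Sum>r\<in>UNIV. TI_inverse Z $ p $ r * ?Y $ snd r $ fst r) * ?Y' $ fst p $ snd p) =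
      (\<Sum>k\<in>UNIV. \<Sum>b\<in>UNIV. ?Y' $ k $ b * (defect_adj Z ** (?Y ** defect Z)) $ b $ k / ?c)"
    unfolding sum_UNIV_prod[of "\<lambda>p. (\<Sum>r\<in>UNIV. TI_inverse Z $ p $ r * ?Y $ snd r $ fst r) * ?Y' $ fst p $ snd p"]
    unfolding sum_UNIV_prod TI_inverse_def by (simp add: inner del: of_nat_add)
  also have "\<dots> = trace (?Y' ** (defect_adj Z ** (?Y ** defect Z))) / ?c"
    by (simp add: trace_def matrix_matrix_mult_def sum_divide_distrib)
  also have "?Y' ** (defect_adj Z ** (?Y ** defect Z)) = mat 1"
    using gradient_identity[OF UU, of "defect_inv Z" Z "cross_defect_inv U Z"]
      defect_inv_mul(1)[OF defect_domainD(2)[OF poisson_domainD(1)[OF Z]]]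
      cross_defect_inv_mul(2)[OF poisson_domainD(2)[OF Z]]
    by (simp add: d_log_poisson_def dbar_log_poisson_def defect_adj_def defect_def cross_defect_def
        matrix_mul_assoc)
  finally show ?thesis by (simp add: trace_I)
qed

lemma of_nat_choose_absorption:
  fixes m n j :: nat
  assumes "1 \<le> j"
  shows "of_nat ((m * n - 1) choose (j - 1)) * (of_nat n / of_nat j) * of_nat m =
    (of_nat ((m * n) choose j) :: 'a::field_char_0)"
proof -
  have "j * ((m * n) choose j) = m * n * ((m * n - 1) choose (j - 1))"
    using binomial_absorption[of "j - 1" "m * n"] assms by simp
  then have "(of_nat j :: 'a) * of_nat ((m * n) choose j) = of_nat m * of_nat n * of_nat ((m * n - 1) choose (j - 1))"
    by (metis of_nat_mult)
  then show ?thesis using assms by (simp add: field_simps)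
qed

lemma Lj_Pj_eq_0_on_poisson_domain:
  fixes U Z :: "complex^'n^'m"
  assumes Z: "Z \<in> poisson_domain U" and UU: "U ** ctrans U = mat 1" and j: "1 \<le> j"
  shows "Lj j (\<lambda>W. complex_of_real (Pj j U W)) Z = 0"
proof -
  define s where "s = (of_real (real CARD('n) / real j) :: complex)"
  define P where "P = poisson_pow (real CARD('n) / real j) U Z"
  define c where "c = (of_nat (CARD('m) + CARD('n)) :: complex)"
  define N where "N = CARD('m \<times> 'n)"
  define k0 where "k0 = - (s * P / c)"
  define v where "v = (\<lambda>p. s * P * s * (\<Sum>r\<in>UNIV. TI_inverse Z $ p $ r * d_log_poisson U Z $ snd r $ fst r))"
  define b where "b = (\<lambda>q. dbar_log_poisson U Z $ fst q $ snd q)"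
  have L: "Lop (\<lambda>W. complex_of_real (Pj j U W)) Z = (\<chi> p q. (if p = q then k0 else 0) + v p * b q)"
    unfolding k0_def v_def b_def s_def P_def c_def by (rule Lop_Pj_eq[OF Z])
  have vb: "(\<Sum>r\<in>UNIV. v r * b r) = s * P * s * (of_nat CARD('m) / c)"
    unfolding v_def b_def c_def TI_inverse_gradient_pairing[OF Z UU, symmetric]
    by (simp add: sum_distrib_left sum_distrib_right mult_ac)
  have comb: "of_nat ((N - 1) choose (j - 1)) * s * of_nat CARD('m) = of_nat (N choose j)"
    using of_nat_choose_absorption[OF j, of "CARD('m)" "CARD('n)"]
    unfolding s_def N_def
    by (simp add: card_cartesian_product UNIV_Times_UNIV[symmetric] del: UNIV_Times_UNIV)
  have "Lj j (\<lambda>W. complex_of_real (Pj j U W)) Z =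
      of_nat (N choose j) * k0 ^ j + of_nat ((N - 1) choose (j - 1)) * k0 ^ (j - 1) * (s * P * s * (of_nat CARD('m) / c))"
    unfolding Lj_def L sum_principal_minors_scalar_plus_rank_one[OF j] vb N_def ..
  also have "\<dots> = k0 ^ (j - 1) * (s * P / c) * (of_nat ((N - 1) choose (j - 1)) * s * of_nat CARD('m) - of_nat (N choose j))"
    using j by (cases j) (simp_all add: k0_def algebra_simps)
  also have "\<dots> = 0" unfolding comb by simp
  finally show ?thesis .
qed

section \<open>The classical domain lies in the domain of the formulas\<close>

lemma Re_sum_cnj_mult: "Re (\<Sum>i\<in>UNIV. cnj (u $ i) * v $ i) = inner u (v::complex^'k)"
  by (simp add: inner_vec_def inner_complex_def)

lemma sum_cnj_mult_self: "(\<Sum>i\<in>UNIV. cnj (u $ i) * u $ i) = of_real ((norm (u::complex^'k))\<^sup>2)"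
proof -
  have "(\<Sum>i\<in>UNIV. cnj (u $ i) * u $ i) = (\<Sum>i\<in>UNIV. of_real ((cmod (u $ i))\<^sup>2))"
    by (rule sum.cong[OF refl]) (metis complex_norm_square mult.commute)
  also have "\<dots> = of_real (\<Sum>i\<in>UNIV. (cmod (u $ i))\<^sup>2)" by simp
  also have "(\<Sum>i\<in>UNIV. (cmod (u $ i))\<^sup>2) = (norm u)\<^sup>2"
    by (simp add: norm_vec_def L2_set_def sum_nonneg)
  finally show ?thesis .
qed

lemma sum_cnj_mult_matrix_vector_mult:
  "(\<Sum>i\<in>UNIV. cnj (x $ i) * (Z *v y) $ i) = (\<Sum>a\<in>UNIV. cnj ((ctrans Z *v x) $ a) * y $ a)"
proof -
  have "(\<Sum>i\<in>UNIV. cnj (x $ i) * (Z *v y) $ i) = (\<Sum>i\<in>UNIV. \<Sum>a\<in>UNIV. cnj (x $ i) * Z $ i $ a * y $ a)"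
    by (simp add: matrix_vector_mult_def sum_distrib_left mult_ac)
  also have "\<dots> = (\<Sum>a\<in>UNIV. \<Sum>i\<in>UNIV. cnj (x $ i) * Z $ i $ a * y $ a)"
    by (rule sum.swap)
  also have "\<dots> = (\<Sum>a\<in>UNIV. cnj ((ctrans Z *v x) $ a) * y $ a)"
    by (simp add: matrix_vector_mult_def ctrans_def sum_distrib_right sum_distrib_left mult_ac)
  finally show ?thesis .
qed

lemma scaleR_matrix_vector_mult: "(t *\<^sub>R A) *v x = t *\<^sub>R (A *v (x::complex^'k))"
  by (simp add: vec_eq_iff matrix_vector_mult_def scaleR_sum_right)

lemma qform_eq_sum_matrix_vector_mult:
  "(\<Sum>i\<in>UNIV. \<Sum>k\<in>UNIV. cnj (x $ i) * M $ i $ k * x $ k) = (\<Sum>i\<in>UNIV. cnj (x $ i) * (M *v x) $ i)"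
  by (simp add: matrix_vector_mult_def sum_distrib_left mult_ac)

lemma Re_qform_defect:
  fixes W :: "complex^'n^'m" and x :: "complex^'m"
  shows "Re (\<Sum>i\<in>UNIV. \<Sum>k\<in>UNIV. cnj (x $ i) * (mat 1 - W ** ctrans W) $ i $ k * x $ k) =
     (norm x)\<^sup>2 - (norm (ctrans W *v x))\<^sup>2"
proof -
  have "(mat 1 - W ** ctrans W) *v x = x - W *v (ctrans W *v x)"
    by (simp add: matrix_vector_mult_diff_rdistrib matrix_vector_mul_assoc)
  then have "(\<Sum>i\<in>UNIV. \<Sum>k\<in>UNIV. cnj (x $ i) * (mat 1 - W ** ctrans W) $ i $ k * x $ k) =
      (\<Sum>i\<in>UNIV. cnj (x $ i) * x $ i) - (\<Sum>i\<in>UNIV. cnj (x $ i) * (W *v (ctrans W *v x)) $ i)"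
    unfolding qform_eq_sum_matrix_vector_mult by (simp add: right_diff_distrib sum_subtractf)
  also have "(\<Sum>i\<in>UNIV. cnj (x $ i) * (W *v (ctrans W *v x)) $ i) =
      (\<Sum>a\<in>UNIV. cnj ((ctrans W *v x) $ a) * (ctrans W *v x) $ a)"
    by (rule sum_cnj_mult_matrix_vector_mult)
  finally show ?thesis unfolding sum_cnj_mult_self by simp
qed

lemma domI_ctrans_contraction:
  fixes Z :: "complex^'n^'m"
  assumes Z: "Z \<in> domI" and x: "x \<noteq> 0"
  shows "(norm (ctrans Z *v x))\<^sup>2 < (norm x)\<^sup>2"
proof -
  have "0 < Re (\<Sum>i\<in>UNIV. \<Sum>k\<in>UNIV. cnj (x $ i) * (mat 1 - Z ** ctrans Z) $ i $ k * x $ k)"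
    using Z x unfolding domI_def pos_def_herm_def by blast
  then show ?thesis unfolding Re_qform_defect by simp
qed

lemma det_defect_scaleR_nonzero:
  fixes Z :: "complex^'n^'m"
  assumes Z: "Z \<in> domI" and t: "\<bar>t\<bar> \<le> 1"
  shows "det (defect (t *\<^sub>R Z)) \<noteq> 0"
proof
  assume "det (defect (t *\<^sub>R Z)) = 0"
  then obtain x where x: "x \<noteq> 0" "defect (t *\<^sub>R Z) *v x = 0" by (rule det_eq_0_imp_kernel)
  have "Re (\<Sum>i\<in>UNIV. \<Sum>k\<in>UNIV. cnj (x $ i) * (mat 1 - (t *\<^sub>R Z) ** ctrans (t *\<^sub>R Z)) $ i $ k * x $ k) = 0"
    unfolding qform_eq_sum_matrix_vector_mult using x(2) by (simp add: defect_def)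
  then have "(norm x)\<^sup>2 = (norm (ctrans (t *\<^sub>R Z) *v x))\<^sup>2" unfolding Re_qform_defect by simp
  also have "\<dots> = t\<^sup>2 * (norm (ctrans Z *v x))\<^sup>2"
    by (simp add: ctrans_scaleR scaleR_matrix_vector_mult power_mult_distrib)
  also have "\<dots> \<le> (norm (ctrans Z *v x))\<^sup>2"
    using t by (simp add: abs_square_le_1 mult_left_le_one_le)
  also have "\<dots> < (norm x)\<^sup>2" by (rule domI_ctrans_contraction[OF Z x(1)])
  finally show False by simp
qed

text \<open>Along the segment from \<open>0\<close> to \<open>Z\<close> the real determinant starts at \<open>1\<close> and never vanishes.\<close>

lemma domI_subset_defect_domain: "domI \<subseteq> defect_domain"
proof
  fix Z :: "complex^'n^'m"
  assume Z: "Z \<in> domI"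
  show "Z \<in> defect_domain"
  proof (rule ccontr)
    assume "Z \<notin> defect_domain"
    then have n: "- Re (det (defect (1 *\<^sub>R Z))) \<ge> 0" by (simp add: defect_domain_def)
    have c: "continuous_on {0..1} (\<lambda>t::real. - Re (det (defect (t *\<^sub>R Z))))"
      by (intro continuous_intros continuous_on_compose2[OF continuous_on_det_defect]) auto
    have z: "- Re (det (defect (0 *\<^sub>R Z))) \<le> 0" by (simp add: defect_def)
    obtain t where t: "0 \<le> t" "t \<le> 1" "- Re (det (defect (t *\<^sub>R Z))) = 0"
      using IVT'[of "\<lambda>t::real. - Re (det (defect (t *\<^sub>R Z)))" 0 0 1, OF z n _ c] by auto
    then have "det (defect (t *\<^sub>R Z)) = 0" by (subst det_defect_real) simp
    moreover have "det (defect (t *\<^sub>R Z)) \<noteq> 0" by (rule det_defect_scaleR_nonzero[OF Z]) (use t in auto)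
    ultimately show False by simp
  qed
qed

lemma domI_det_cross_defect_nonzero:
  fixes U Z :: "complex^'n^'m"
  assumes Z: "Z \<in> domI" and UU: "U ** ctrans U = mat 1"
  shows "det (cross_defect U Z) \<noteq> 0"
proof
  assume "det (cross_defect U Z) = 0"
  then obtain x where x: "x \<noteq> 0" "cross_defect U Z *v x = 0" by (rule det_eq_0_imp_kernel)
  define y where "y = ctrans U *v x"
  define w where "w = ctrans Z *v x"
  have xy: "x = Z *v y"
    using x(2) unfolding cross_defect_def y_def
    by (simp add: matrix_vector_mult_diff_rdistrib matrix_vector_mul_assoc)
  have ny: "(norm x)\<^sup>2 - (norm y)\<^sup>2 = 0"
    using Re_qform_defect[where W=U and x=x] unfolding UU y_def by simp
  have "(norm x)\<^sup>2 = Re (\<Sum>i\<in>UNIV. cnj (x $ i) * x $ i)" by (simp add: sum_cnj_mult_self)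
  also have "\<dots> = Re (\<Sum>i\<in>UNIV. cnj (x $ i) * (Z *v y) $ i)" using xy by simp
  also have "\<dots> = inner w y" unfolding sum_cnj_mult_matrix_vector_mult Re_sum_cnj_mult w_def ..
  also have "\<dots> \<le> norm w * norm y" by (rule norm_cauchy_schwarz)
  finally have le0: "(norm x)\<^sup>2 \<le> norm w * norm y" .
  have "(norm y)\<^sup>2 = (norm x)\<^sup>2" using ny by simp
  then have "norm y = norm x" by (rule power2_eq_imp_eq[OF _ norm_ge_zero norm_ge_zero])
  then have le: "(norm x)\<^sup>2 \<le> norm w * norm x" using le0 by simp
  have "(norm w)\<^sup>2 < (norm x)\<^sup>2" unfolding w_def by (rule domI_ctrans_contraction[OF Z x(1)])
  then have "norm w < norm x" by (rule power_less_imp_less_base[OF _ norm_ge_zero])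
  moreover have "0 < norm x" using x(1) by simp
  ultimately have "norm w * norm x < (norm x)\<^sup>2" by (simp add: power2_eq_square)
  then show False using le by simp
qed

lemma domI_subset_poisson_domain:
  fixes U :: "complex^'n^'m"
  assumes "U ** ctrans U = mat 1"
  shows "domI \<subseteq> poisson_domain U"
  using domI_subset_defect_domain domI_det_cross_defect_nonzero[OF _ assms]
  by (auto simp: poisson_domain_def)

theorem mainTheorem7:
  fixes U :: "complex^'n^'m" and Z :: "complex^'n^'m" and j :: nat
  assumes "CARD('m) \<le> CARD('n)"
    and "U ** ctrans U = mat 1"
    and "j \<in> {1..CARD('m) * CARD('n)}"
    and "Z \<in> domI"
  shows "Lj j (\<lambda>W. complex_of_real (Pj j U W)) Z = 0"
proof (rule Lj_Pj_eq_0_on_poisson_domain)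
  show "Z \<in> poisson_domain U" using domI_subset_poisson_domain[OF assms(2)] assms(4) by blast
  show "U ** ctrans U = mat 1" by fact
  show "1 \<le> j" using assms(3) by simp
qed

end
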